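(* Fix $m\ge 1$ and two tree structure ensembles $\mathfrak{E},\mathfrak{E}'\in\Omega_{\mathrm{TSE},m}$, and let $\Delta\mathrm{BIC}(\mathfrak{E},\mathfrak{E}')=\mathrm{BIC}(\mathfrak{E})-\mathrm{BIC}(\mathfrak{E}')$. Then, as $n\to\infty$, $$\Delta\mathrm{BIC}(\mathfrak{E},\mathfrak{E}')=\frac{n}{\sigma^2}\Big(\mathrm{Bias}^2(\mathfrak{E};f^* )-\mathrm{Bias}^2(\mathfrak{E}';f^* )\Big)+O_{\mathbb P}\big(n^{1/2}\big).$$ If furthermore $\Pi_{\mathfrak{E}}[f^*]=\Pi_{\mathfrak{E}'}[f^*]$, then $$\Delta\mathrm{BIC}(\mathfrak{E},\mathfrak{E}')=\big(\mathrm{df}(\mathfrak{E})-\mathrm{df}(\mathfrak{E}')\big)\log n+O_{\mathbb P}(1).$$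
   Context: Data: Let $B,d\ge1$ be integers and $\mathcal X=\{1,\dots,B\}^d$. Let $f^*:\mathcal X\to\mathbb R$, let $\nu$ be a probability measure on $\mathcal X$ with full support, and let $\epsilon$ be a (centered) sub-Gaussian random variable. The training data consist of $n$ i.i.d. pairs $(\mathbf x_i,y_i)$ with $\mathbf x_i\sim\nu$ and $y_i=f^*(\mathbf x_i)+\epsilon_i$, $\epsilon_i$ i.i.d. copies of $\epsilon$ independent of the covariates; $\mathbf y=(y_1,\dots,y_n)^\top$. $\mathbb P_n$ denotes probability over the training data. Trees: A cell is a set $\{\mathbf x\in\mathcal X: l_i<x_i\le u_i,\ i=1,\dots,d\}$. A tree structure $\mathfrak T$ is a finite rooted binary tree whose internal nodes carry splitting rules $(v,t)$ (feature $v$, threshold $t$); the root corresponds to $\mathcal X$, and an internal node with cell $\mathfrak t$ and rule $(v,t)$ has children $\{\mathbf x\in\mathfrak t: x_v\le t\}$ and $\{\mathbf x\in\mathfrak t:x_v>t\}$ (both nonempty). The leaves partition $\mathcal X$. $\Omega_{\mathrm{TSE},m}$ is the (finite) set of tree structure ensembles (TSEs) $\mathfrak E=(\mathfrak T_1,\dots,\mathfrak T_m)$. $\mathcal F(\mathfrak E)\subset L^2(\nu)$ is the span of the indicator functions of all leaves of all trees of $\mathfrak E$; $\mathrm{df}(\mathfrak E)=\dim\mathcal F(\mathfrak E)$; $\Pi_{\mathfrak E}$ is the $L^2(\nu)$-orthogonal projection onto $\mathcal F(\mathfrak E)$; $\mathrm{Bias}^2(\mathfrak E;f)=\int(f-\Pi_{\mathfrak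 E}f)^2\,d\nu$. BIC: Let $\boldsymbol\Psi$ be the $n\times b$ matrix whose columns are the indicator vectors (over the training points) of all $b$ leaves of $\mathfrak E$, and $\mathbf P_{\mathfrak E}$ the orthogonal projection matrix onto its column space. For fixed $\sigma^2>0$, $\mathrm{BIC}(\mathfrak E)=\sigma^{-2}\mathbf y^\top(\mathbf I-\mathbf P_{\mathfrak E})\mathbf y+\mathrm{df}(\mathfrak E)\log n+n\log(2\pi\sigma^2)$. Notation: for sequences of random variables, $a_n=O_{\mathbb P}(b_n)$ means that for every $0<\delta<1$ there exist $N,C>0$ with $\sup_{n>N}\mathbb P_n\{|a_n/b_n|>C\}<\delta$; $C,N$ may depend on everything except $n$. *)

theory Defs
  imports "HOL-Probability.Probability" "HOL-Library.Function_Algebras"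
begin

text \<open>Points of X = {1..B}^d are functions nat => nat, coordinates indexed by 0..d-1
  (coordinate v corresponds to feature v+1 of the paper); extensional (undefined) outside.\<close>

definition grid :: "nat \<Rightarrow> nat \<Rightarrow> (nat \<Rightarrow> nat) set" where
  "grid B d = PiE {..<d} (\<lambda>_. {1..B})"

datatype tree = Leaf | Node nat nat tree tree   \<comment> \<open>Node v t left right: rule x_v <= t\<close>

fun tree_leaves :: "(nat \<Rightarrow> nat) set \<Rightarrow> tree \<Rightarrow> (nat \<Rightarrow> nat) set set" where
  "tree_leaves C Leaf = {C}"
| "tree_leaves C (Node v t l r) =
     tree_leaves {x \<in> C. x v \<le> t} l \<union> tree_leaves {x \<in> C. t < x v} r"

fun valid_tree :: "nat \<Rightarrow> (nat \<Rightarrow> nat) set \<Rightarrow> tree \<Rightarrow> bool" where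
  "valid_tree d C Leaf = True"
| "valid_tree d C (Node v t l r) =
     (v < d \<and> {x \<in> C. x v \<le> t} \<noteq> {} \<and> {x \<in> C. t < x v} \<noteq> {}
      \<and> valid_tree d {x \<in> C. x v \<le> t} l \<and> valid_tree d {x \<in> C. t < x v} r)"

definition TSE :: "nat \<Rightarrow> nat \<Rightarrow> nat \<Rightarrow> tree list set" where
  "TSE B d m = {E. length E = m \<and> (\<forall>T\<in>set E. valid_tree d (grid B d) T)}"

definition ens_leaves :: "nat \<Rightarrow> nat \<Rightarrow> tree list \<Rightarrow> (nat \<Rightarrow> nat) set set" where
  "ens_leaves B d E = (\<Union>T\<in>set E. tree_leaves (grid B d) T)"

definition fscale :: "real \<Rightarrow> ('a \<Rightarrow> real) \<Rightarrow> ('a \<Rightarrow> real)" where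
  "fscale c f = (\<lambda>x. c * f x)"

text \<open>Span of the leaf indicators (functions vanish outside X; since nu has full support,
  this is F(E) as a subspace of L2(nu)).\<close>
definition Fspace :: "nat \<Rightarrow> nat \<Rightarrow> tree list \<Rightarrow> ((nat \<Rightarrow> nat) \<Rightarrow> real) set" where
  "Fspace B d E = module.span fscale ((\<lambda>L. indicator L) ` ens_leaves B d E)"

definition df :: "nat \<Rightarrow> nat \<Rightarrow> tree list \<Rightarrow> nat" where
  "df B d E = vector_space.dim fscale (Fspace B d E)"

definition proj :: "(nat \<Rightarrow> nat) pmf \<Rightarrow> nat \<Rightarrow> nat \<Rightarrow> tree list
    \<Rightarrow> ((nat \<Rightarrow> nat) \<Rightarrow> real) \<Rightarrow> ((nat \<Rightarrow> nat) \<Rightarrow> real)" where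
  "proj \<nu> B d E f = (THE g. g \<in> Fspace B d E \<and>
      (\<forall>h\<in>Fspace B d E. measure_pmf.expectation \<nu> (\<lambda>x. (f x - g x) * h x) = 0))"

definition bias2 :: "(nat \<Rightarrow> nat) pmf \<Rightarrow> nat \<Rightarrow> nat \<Rightarrow> tree list \<Rightarrow> ((nat \<Rightarrow> nat) \<Rightarrow> real) \<Rightarrow> real" where
  "bias2 \<nu> B d E f = measure_pmf.expectation \<nu> (\<lambda>x. (f x - proj \<nu> B d E f x)^2)"

text \<open>Column space of Psi (n x b matrix of leaf indicators evaluated at the training points),
  as a subset of R^n represented by functions on {..<n}, and the orthogonal projection P.\<close>
definition colspace :: "nat \<Rightarrow> nat \<Rightarrow> tree list \<Rightarrow> nat \<Rightarrow> (nat \<Rightarrow> nat \<Rightarrow> nat)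
    \<Rightarrow> (nat \<Rightarrow> real) set" where
  "colspace B d E n xs = {v. \<exists>c. v = (\<lambda>i. if i < n then
       (\<Sum>L\<in>ens_leaves B d E. c L * indicator L (xs i)) else 0)}"

definition projmat :: "nat \<Rightarrow> nat \<Rightarrow> tree list \<Rightarrow> nat \<Rightarrow> (nat \<Rightarrow> nat \<Rightarrow> nat)
    \<Rightarrow> (nat \<Rightarrow> real) \<Rightarrow> (nat \<Rightarrow> real)" where
  "projmat B d E n xs y = (THE v. v \<in> colspace B d E n xs \<and>
      (\<forall>w\<in>colspace B d E n xs. (\<Sum>i<n. (y i - v i) * w i) = 0))"

definition BIC :: "real \<Rightarrow> nat \<Rightarrow> nat \<Rightarrow> tree list \<Rightarrow> nat \<Rightarrow> (nat \<Rightarrow> nat \<Rightarrow> nat)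
    \<Rightarrow> (nat \<Rightarrow> real) \<Rightarrow> real" where
  "BIC \<sigma>2 B d E n xs y =
     (\<Sum>i<n. y i * (y i - projmat B d E n xs y i)) / \<sigma>2
     + real (df B d E) * ln (real n) + real n * ln (2 * pi * \<sigma>2)"

definition subgaussian :: "real measure \<Rightarrow> bool" where
  "subgaussian M \<longleftrightarrow> (\<exists>K>0. \<forall>l::real. integrable M (\<lambda>e. exp (l * e)) \<and>
      (\<integral>e. exp (l * e) \<partial>M) \<le> exp (l^2 * K^2 / 2))"

definition centered :: "real measure \<Rightarrow> bool" where
  "centered M \<longleftrightarrow> integrable M (\<lambda>e. e) \<and> (\<integral>e. e \<partial>M) = 0"

definition data :: "(nat \<Rightarrow> nat) pmf \<Rightarrow> real measure \<Rightarrow> nat \<Rightarrow> (nat \<Rightarrow> (nat \<Rightarrow> nat) \<times> real) measure" where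
  "data \<nu> Noise n = PiM {..<n} (\<lambda>_. measure_pmf \<nu> \<Otimes>\<^sub>M Noise)"

definition covs :: "(nat \<Rightarrow> (nat \<Rightarrow> nat) \<times> real) \<Rightarrow> nat \<Rightarrow> nat \<Rightarrow> nat" where
  "covs \<omega> i = fst (\<omega> i)"

definition resp :: "((nat \<Rightarrow> nat) \<Rightarrow> real) \<Rightarrow> (nat \<Rightarrow> (nat \<Rightarrow> nat) \<times> real) \<Rightarrow> nat \<Rightarrow> real" where
  "resp f \<omega> i = f (fst (\<omega> i)) + snd (\<omega> i)"

text \<open>a_n = O_P(b_n) where a_n(omega) is a random variable on data n; stated with outer
  probability (smallest measurable cover), which coincides with P_n for measurable events.\<close>
definition bigO_P :: "(nat \<Rightarrow> 'a measure) \<Rightarrow> (nat \<Rightarrow> 'a \<Rightarrow> real) \<Rightarrow> (nat \<Rightarrow> real) \<Rightarrow> bool" where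
  "bigO_P P a b \<longleftrightarrow> (\<forall>\<delta>. 0 < \<delta> \<and> \<delta> < 1 \<longrightarrow> (\<exists>N C. N > 0 \<and> C > 0 \<and> (\<forall>n. real n > N \<longrightarrow>
      (\<exists>S\<in>sets (P n). {\<omega>\<in>space (P n). \<bar>a n \<omega> / b n\<bar> > C} \<subseteq> S \<and> measure (P n) S < \<delta>))))"


end

theory Submission
  imports Defs
begin

(* On the finite grid everything reduces to cell counts N_x and cell noise sums S_x. Writing
   r = f* - Pi_E f* for the population residual, the residual sum of squares of the sample fit is
     RSS(E) = sum_x r(x)^2 N_x + 2 sum_x r(x) S_x + sum_i eps_i^2 - Q,
   where Q >= 0 is the squared sample norm of h = (sample fit) - Pi_E f*, a function in F(E).
   Since r is L2(nu)-orthogonal to F(E), Q is controlled by the fluctuations N_x - n nu(x) and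
   S_x alone, which are O(sqrt n) with high probability (Chebyshev), and then Q = O(1).
   Hence RSS(E) - RSS(E') = n (Bias^2(E) - Bias^2(E')) + O_P(sqrt n), and if the two projections
   agree the first two sums cancel exactly and RSS(E) - RSS(E') = O_P(1). *)

section \<open>Weighted least squares\<close>

definition weighted_inner :: "'k set \<Rightarrow> ('k \<Rightarrow> real) \<Rightarrow> ('k \<Rightarrow> real) \<Rightarrow> ('k \<Rightarrow> real) \<Rightarrow> real" where
  "weighted_inner K w u v = (\<Sum>k\<in>K. w k * u k * v k)"

definition lincomb :: "'a set \<Rightarrow> ('a \<Rightarrow> 'k \<Rightarrow> real) \<Rightarrow> ('a \<Rightarrow> real) \<Rightarrow> 'k \<Rightarrow> real" where
  "lincomb A \<phi> c k = (\<Sum>a\<in>A. c a * \<phi> a k)"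

lemma weighted_inner_diff_left:
  "weighted_inner K w (\<lambda>k. u k - v k) z = weighted_inner K w u z - weighted_inner K w v z"
  unfolding weighted_inner_def by (simp add: algebra_simps sum_subtractf)

lemma weighted_inner_scale_left:
  "weighted_inner K w (\<lambda>k. t * u k) z = t * weighted_inner K w u z"
  unfolding weighted_inner_def by (simp add: algebra_simps sum_distrib_left)

lemma weighted_inner_add_right:
  "weighted_inner K w u (\<lambda>k. v k + z k) = weighted_inner K w u v + weighted_inner K w u z"
  unfolding weighted_inner_def by (simp add: algebra_simps sum.distrib)

lemma weighted_inner_lincomb_right:
  "weighted_inner K w u (lincomb A \<phi> c) = (\<Sum>a\<in>A. c a * weighted_inner K w u (\<phi> a))"
  unfolding weighted_inner_def lincomb_def
  by (simp add: sum_distrib_left sum.swap[of _ K] algebra_simps)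

lemma lincomb_diff: "lincomb A \<phi> (\<lambda>a. c a - c' a) k = lincomb A \<phi> c k - lincomb A \<phi> c' k"
  unfolding lincomb_def by (simp add: algebra_simps sum_subtractf)

lemma weighted_inner_self_eq_0_iff:
  assumes "finite K" "\<forall>k\<in>K. 0 \<le> w k"
  shows "weighted_inner K w u u = 0 \<longleftrightarrow> (\<forall>k\<in>K. w k * u k = 0)"
proof -
  have "weighted_inner K w u u = 0 \<longleftrightarrow> (\<forall>k\<in>K. w k * u k * u k = 0)"
    unfolding weighted_inner_def using assms
    by (intro sum_nonneg_eq_0_iff) (auto simp: mult.assoc intro!: mult_nonneg_nonneg)
  also have "\<dots> \<longleftrightarrow> (\<forall>k\<in>K. w k * u k = 0)"
    using assms(2) by (metis mult_eq_0_iff mult.assoc)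
  finally show ?thesis .
qed

lemma weighted_inner_null:
  assumes "finite K" "\<forall>k\<in>K. 0 \<le> w k" "weighted_inner K w u u = 0"
  shows "weighted_inner K w v u = 0"
proof -
  have "\<forall>k\<in>K. w k * u k = 0"
    using assms weighted_inner_self_eq_0_iff by blast
  then show ?thesis
    unfolding weighted_inner_def by (intro sum.neutral) (auto simp: ac_simps)
qed

text \<open>Gram--Schmidt: orthogonalise \<open>\<phi> a\<close> against the span of the remaining \<open>\<phi> b\<close> and add
  the component of the old residual along it. The weights may vanish, so the new direction
  may be null; then the quotient \<open>t\<close> is \<open>0\<close> and nothing changes.\<close>
lemma normal_equations_solvable:
  fixes \<phi> :: "'a \<Rightarrow> 'k \<Rightarrow> real" and y :: "'k \<Rightarrow> real"
  assumes "finite K" "\<forall>k\<in>K. 0 \<le> w k" "finite A"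
  shows "\<exists>c. \<forall>b\<in>A. weighted_inner K w (\<lambda>k. y k - lincomb A \<phi> c k) (\<phi> b) = 0"
  using assms(3)
proof (induction A arbitrary: y rule: finite_induct)
  case empty
  then show ?case by simp
next
  case (insert a A)
  let ?ip = "weighted_inner K w"
  obtain p where p: "\<forall>b\<in>A. ?ip (\<lambda>k. \<phi> a k - lincomb A \<phi> p k) (\<phi> b) = 0"
    using insert.IH by blast
  obtain c0 where c0: "\<forall>b\<in>A. ?ip (\<lambda>k. y k - lincomb A \<phi> c0 k) (\<phi> b) = 0"
    using insert.IH by blast
  define a' where "a' k = \<phi> a k - lincomb A \<phi> p k" for k
  define t where "t = ?ip (\<lambda>k. y k - lincomb A \<phi> c0 k) a' / ?ip a' a'"
  define r where "r k = y k - lincomb A \<phi> c0 k - t * a' k" for k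
  define c where "c = (\<lambda>b. c0 b - t * p b)(a := t)"
  have residual: "(\<lambda>k. y k - lincomb (insert a A) \<phi> c k) = r"
  proof
    fix k
    have "lincomb (insert a A) \<phi> c k = t * \<phi> a k + (\<Sum>b\<in>A. (c0 b - t * p b) * \<phi> b k)"
      using insert.hyps unfolding c_def lincomb_def by (auto intro!: sum.cong)
    also have "\<dots> = lincomb A \<phi> c0 k + t * a' k"
      unfolding a'_def lincomb_def by (simp add: algebra_simps sum_subtractf sum_distrib_left)
    finally show "y k - lincomb (insert a A) \<phi> c k = r k" unfolding r_def by simp
  qed
  have r_A: "?ip r (\<phi> b) = 0" if "b \<in> A" for b
    using that c0 p unfolding r_def a'_def weighted_inner_diff_left weighted_inner_scale_left by simp
  have r_a': "?ip r a' = 0"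
  proof (cases "?ip a' a' = 0")
    case True
    then show ?thesis using weighted_inner_null[OF assms(1,2)] by blast
  next
    case False
    then show ?thesis
      unfolding r_def weighted_inner_diff_left weighted_inner_scale_left t_def by simp
  qed
  have "?ip r (\<phi> a) = ?ip r a' + ?ip r (lincomb A \<phi> p)"
    by (subst weighted_inner_add_right[symmetric]) (simp add: a'_def)
  then have "?ip r (\<phi> a) = 0"
    using r_a' r_A by (simp add: weighted_inner_lincomb_right)
  then show ?case
    using r_A unfolding residual[symmetric] by (intro exI[of _ c]) auto
qed

lemma weighted_least_squares_exists:
  assumes "finite K" "\<forall>k\<in>K. 0 \<le> w k" "finite A"
  shows "\<exists>c. \<forall>c'. weighted_inner K w (\<lambda>k. y k - lincomb A \<phi> c k) (lincomb A \<phi> c') = 0"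
proof -
  obtain c where "\<forall>b\<in>A. weighted_inner K w (\<lambda>k. y k - lincomb A \<phi> c k) (\<phi> b) = 0"
    using normal_equations_solvable[OF assms] by blast
  then show ?thesis
    by (intro exI[of _ c]) (simp add: weighted_inner_lincomb_right)
qed

lemma weighted_least_squares_unique:
  assumes "finite K" "\<forall>k\<in>K. 0 \<le> w k"
    and "\<forall>c'. weighted_inner K w (\<lambda>k. y k - lincomb A \<phi> c1 k) (lincomb A \<phi> c') = 0"
    and "\<forall>c'. weighted_inner K w (\<lambda>k. y k - lincomb A \<phi> c2 k) (lincomb A \<phi> c') = 0"
    and "k \<in> K" "w k \<noteq> 0"
  shows "lincomb A \<phi> c1 k = lincomb A \<phi> c2 k"
proof -
  let ?dc = "\<lambda>a. c2 a - c1 a"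
  have "weighted_inner K w (lincomb A \<phi> ?dc) (lincomb A \<phi> ?dc)
      = weighted_inner K w (\<lambda>k. y k - lincomb A \<phi> c1 k) (lincomb A \<phi> ?dc)
        - weighted_inner K w (\<lambda>k. y k - lincomb A \<phi> c2 k) (lincomb A \<phi> ?dc)"
    unfolding weighted_inner_diff_left[symmetric] by (simp add: lincomb_diff[abs_def])
  then have "\<forall>k\<in>K. w k * lincomb A \<phi> ?dc k = 0"
    using assms(3,4) weighted_inner_self_eq_0_iff[OF assms(1,2)] by simp
  then show ?thesis
    using assms(5,6) by (simp add: lincomb_diff) metis
qed

section \<open>Leaf spans and the two projections\<close>

lemma finite_tree_leaves: "finite (tree_leaves C T)"
  by (induction T arbitrary: C) auto

lemma tree_leaves_subset: "L \<in> tree_leaves C T \<Longrightarrow> L \<subseteq> C"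
  by (induction T arbitrary: C) fastforce+

lemma finite_grid: "finite (grid B d)"
  unfolding grid_def by (intro finite_PiE) auto

lemma finite_ens_leaves: "finite (ens_leaves B d E)"
  unfolding ens_leaves_def by (simp add: finite_tree_leaves)

lemma ens_leaves_subset_grid: "L \<in> ens_leaves B d E \<Longrightarrow> L \<subseteq> grid B d"
  unfolding ens_leaves_def using tree_leaves_subset by blast

lemma lincomb_ens_leaves_outside_grid:
  "x \<notin> grid B d \<Longrightarrow> lincomb (ens_leaves B d E) indicator c x = 0"
  unfolding lincomb_def by (intro sum.neutral) (auto simp: indicator_def dest!: ens_leaves_subset_grid)

lemma inj_indicator_real: "inj (indicator :: 'a set \<Rightarrow> 'a \<Rightarrow> real)"
proof (rule injI)
  fix A B :: "'a set"
  assume "indicator A = (indicator B :: 'a \<Rightarrow> real)"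
  then have "x \<in> A \<longleftrightarrow> x \<in> B" for x
    by (metis indicator_def of_bool_eq_iff)
  then show "A = B" by blast
qed

lemma sum_fun_apply: "(\<Sum>a\<in>A. f a) x = (\<Sum>a\<in>A. f a x)"
  by (induction A rule: infinite_finite_induct) auto

lemma span_indicators_eq_range_lincomb:
  assumes "finite S"
  shows "module.span fscale ((\<lambda>L. indicator L) ` S) = range (lincomb S indicator)"
proof -
  interpret module fscale
    by unfold_locales (auto simp: fscale_def algebra_simps)
  have inj: "inj_on (indicator :: 'a set \<Rightarrow> 'a \<Rightarrow> real) S"
    using inj_indicator_real by (rule inj_on_subset) simp
  have span_sum: "(\<Sum>v\<in>indicator ` S. fscale (u v) v) = lincomb S indicator (u \<circ> indicator)" for u
    by (rule ext) (simp add: sum.reindex[OF inj] fscale_def lincomb_def sum_fun_apply)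
  have "lincomb S indicator c = lincomb S indicator ((c \<circ> inv (indicator :: 'a set \<Rightarrow> 'a \<Rightarrow> real)) \<circ> indicator)" for c
    by (simp add: inv_f_f[OF inj_indicator_real] comp_def)
  then have "range (\<lambda>u :: ('a \<Rightarrow> real) \<Rightarrow> real. lincomb S indicator (u \<circ> indicator)) = range (lincomb S indicator)"
    by (auto simp: image_iff)
  then show ?thesis
    unfolding span_finite[OF finite_imageI[OF assms]] span_sum .
qed

lemma Fspace_eq_range_lincomb: "Fspace B d E = range (lincomb (ens_leaves B d E) indicator)"
  unfolding Fspace_def by (rule span_indicators_eq_range_lincomb[OF finite_ens_leaves])

lemma expectation_eq_sum_set_pmf:
  fixes h :: "'a \<Rightarrow> real"
  assumes "finite (set_pmf \<nu>)"
  shows "measure_pmf.expectation \<nu> h = (\<Sum>x\<in>set_pmf \<nu>. pmf \<nu> x * h x)"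
  using assms by (subst integral_measure_pmf[OF assms]) auto

lemma proj_characterization:
  assumes "set_pmf \<nu> = grid B d"
  shows "\<exists>c. proj \<nu> B d E f = lincomb (ens_leaves B d E) indicator c \<and>
    (\<forall>c'. (\<Sum>x\<in>grid B d. pmf \<nu> x * (f x - proj \<nu> B d E f x) * lincomb (ens_leaves B d E) indicator c' x) = 0)"
proof -
  let ?Lv = "ens_leaves B d E" and ?X = "grid B d"
  let ?orth = "\<lambda>c. \<forall>c'. weighted_inner ?X (pmf \<nu>) (\<lambda>x. f x - lincomb ?Lv indicator c x) (lincomb ?Lv indicator c') = 0"
  have pmf_nonneg: "\<forall>x\<in>?X. 0 \<le> pmf \<nu> x" by simp
  obtain c where c: "?orth c"
    using weighted_least_squares_exists[OF finite_grid pmf_nonneg finite_ens_leaves] by blast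
  have expectation: "measure_pmf.expectation \<nu> h = (\<Sum>x\<in>?X. pmf \<nu> x * h x)" for h
    using expectation_eq_sum_set_pmf[of \<nu> h] finite_grid assms by simp
  have orth_iff: "(\<forall>h\<in>Fspace B d E. measure_pmf.expectation \<nu> (\<lambda>x. (f x - lincomb ?Lv indicator c' x) * h x) = 0)
      \<longleftrightarrow> ?orth c'" for c'
    by (simp add: Fspace_eq_range_lincomb expectation weighted_inner_def mult.assoc)
  have "proj \<nu> B d E f = lincomb ?Lv indicator c"
    unfolding proj_def
  proof (rule the_equality)
    show "lincomb ?Lv indicator c \<in> Fspace B d E \<and>
        (\<forall>h\<in>Fspace B d E. measure_pmf.expectation \<nu> (\<lambda>x. (f x - lincomb ?Lv indicator c x) * h x) = 0)"
      using c orth_iff by (simp add: Fspace_eq_range_lincomb)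
  next
    fix g assume g: "g \<in> Fspace B d E \<and>
        (\<forall>h\<in>Fspace B d E. measure_pmf.expectation \<nu> (\<lambda>x. (f x - g x) * h x) = 0)"
    then obtain c' where g_eq: "g = lincomb ?Lv indicator c'"
      by (auto simp: Fspace_eq_range_lincomb)
    have "g x = lincomb ?Lv indicator c x" for x
    proof (cases "x \<in> ?X")
      case True
      have "?orth c'"
        using g orth_iff unfolding g_eq by blast
      moreover have "pmf \<nu> x \<noteq> 0"
        using True assms by (simp add: set_pmf_iff[symmetric])
      ultimately show ?thesis
        unfolding g_eq by (rule weighted_least_squares_unique[OF finite_grid pmf_nonneg _ c True])
    qed (simp add: g_eq lincomb_ens_leaves_outside_grid)
    then show "g = lincomb ?Lv indicator c" ..
  qed
  then show ?thesis
    using c by (intro exI[of _ c]) (simp add: weighted_inner_def)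
qed

lemma projmat_characterization:
  "\<exists>c. (\<forall>i<n. projmat B d E n xs y i = lincomb (ens_leaves B d E) indicator c (xs i)) \<and>
    (\<forall>c'. (\<Sum>i<n. (y i - projmat B d E n xs y i) * lincomb (ens_leaves B d E) indicator c' (xs i)) = 0)"
proof -
  let ?Lv = "ens_leaves B d E"
  let ?\<psi> = "\<lambda>L i. indicator L (xs i) :: real"
  let ?fit = "\<lambda>c i. if i < n then lincomb ?Lv ?\<psi> c i else 0"
  let ?orth = "\<lambda>c. \<forall>c'. weighted_inner {..<n} (\<lambda>_. 1) (\<lambda>i. y i - lincomb ?Lv ?\<psi> c i) (lincomb ?Lv ?\<psi> c') = 0"
  have ones_nonneg: "\<forall>i\<in>{..<n}. (0::real) \<le> 1" by simp
  obtain c where c: "?orth c"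
    using weighted_least_squares_exists[OF _ ones_nonneg finite_ens_leaves] by blast
  have colspace_eq: "colspace B d E n xs = range ?fit"
    unfolding colspace_def lincomb_def by auto
  have orth_iff: "(\<forall>w\<in>colspace B d E n xs. (\<Sum>i<n. (y i - ?fit c' i) * w i) = 0) \<longleftrightarrow> ?orth c'" for c'
    by (simp add: colspace_eq weighted_inner_def)
  have "projmat B d E n xs y = ?fit c"
    unfolding projmat_def
  proof (rule the_equality)
    show "?fit c \<in> colspace B d E n xs \<and> (\<forall>w\<in>colspace B d E n xs. (\<Sum>i<n. (y i - ?fit c i) * w i) = 0)"
      using c orth_iff by (simp add: colspace_eq)
  next
    fix v assume v: "v \<in> colspace B d E n xs \<and> (\<forall>w\<in>colspace B d E n xs. (\<Sum>i<n. (y i - v i) * w i) = 0)"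
    then obtain c' where v_eq: "v = ?fit c'"
      by (auto simp: colspace_eq)
    have "v i = ?fit c i" for i
      using weighted_least_squares_unique[OF _ ones_nonneg _ c, where k=i] v orth_iff
      unfolding v_eq by auto
    then show "v = ?fit c" ..
  qed
  then show ?thesis
    using c by (intro exI[of _ c]) (simp add: weighted_inner_def lincomb_def)
qed

section \<open>Residual sums of squares on balanced samples\<close>

definition cell_count :: "(nat \<Rightarrow> 'a) \<Rightarrow> nat \<Rightarrow> 'a \<Rightarrow> nat" where
  "cell_count xs n x = card {i\<in>{..<n}. xs i = x}"

definition cell_sum :: "(nat \<Rightarrow> 'a) \<Rightarrow> (nat \<Rightarrow> real) \<Rightarrow> nat \<Rightarrow> 'a \<Rightarrow> real" where
  "cell_sum xs e n x = (\<Sum>i\<in>{i\<in>{..<n}. xs i = x}. e i)"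

definition balanced_sample :: "'a pmf \<Rightarrow> real \<Rightarrow> nat \<Rightarrow> (nat \<Rightarrow> 'a) \<Rightarrow> (nat \<Rightarrow> real) \<Rightarrow> bool" where
  "balanced_sample \<nu> C n xs e \<longleftrightarrow> (\<forall>i<n. xs i \<in> set_pmf \<nu>) \<and>
     (\<forall>x\<in>set_pmf \<nu>. \<bar>real (cell_count xs n x) - real n * pmf \<nu> x\<bar> \<le> C * sqrt (real n)
                   \<and> \<bar>cell_sum xs e n x\<bar> \<le> C * sqrt (real n))"

definition rss :: "nat \<Rightarrow> nat \<Rightarrow> tree list \<Rightarrow> nat \<Rightarrow> (nat \<Rightarrow> nat \<Rightarrow> nat) \<Rightarrow> (nat \<Rightarrow> real) \<Rightarrow> real" where
  "rss B d E n xs y = (\<Sum>i<n. y i * (y i - projmat B d E n xs y i))"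

lemma BIC_diff:
  "BIC \<sigma>2 B d E n xs y - BIC \<sigma>2 B d E' n xs y
     = (rss B d E n xs y - rss B d E' n xs y) / \<sigma>2 + (real (df B d E) - real (df B d E')) * ln (real n)"
  unfolding BIC_def rss_def by (simp add: diff_divide_distrib algebra_simps)

lemma cell_count_eq_sum_indicator: "real (cell_count xs n x) = (\<Sum>i<n. indicator {x} (xs i))"
  unfolding cell_count_def by (simp add: sum.inter_filter[symmetric] indicator_def of_bool_def)

lemma cell_sum_eq_sum_indicator: "cell_sum xs e n x = (\<Sum>i<n. indicator {x} (xs i) * e i)"
  unfolding cell_sum_def sum.inter_filter[OF finite_lessThan] by (intro sum.cong) (auto simp: indicator_def)

lemma sum_lessThan_group_cells:
  fixes n :: nat
  assumes "\<forall>i<n. xs i \<in> X" "finite X"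
  shows "(\<Sum>i<n. F i) = (\<Sum>x\<in>X. \<Sum>i\<in>{i\<in>{..<n}. xs i = x}. F i)"
  using assms by (intro sum.group[of "{..<n}" X xs F, symmetric]) auto

lemma sum_sample_eq_cells:
  assumes "\<forall>i<n. xs i \<in> X" "finite X"
  shows "(\<Sum>i<n. g (xs i)) = (\<Sum>x\<in>X. g x * real (cell_count xs n x))"
  unfolding sum_lessThan_group_cells[OF assms] cell_count_def
  by (intro sum.cong) auto

lemma sum_sample_mult_eq_cells:
  assumes "\<forall>i<n. xs i \<in> X" "finite X"
  shows "(\<Sum>i<n. g (xs i) * e i) = (\<Sum>x\<in>X. g x * cell_sum xs e n x)"
  unfolding sum_lessThan_group_cells[OF assms] cell_sum_def sum_distrib_left
  by (intro sum.cong) auto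

lemma sum_sq_sample_eq_cells:
  assumes "\<forall>i<n. xs i \<in> X" "finite X"
  shows "(\<Sum>i<n. (r (xs i) + e i)\<^sup>2) = (\<Sum>x\<in>X. (r x)\<^sup>2 * real (cell_count xs n x))
           + 2 * (\<Sum>x\<in>X. r x * cell_sum xs e n x) + (\<Sum>i<n. (e i)\<^sup>2)"
proof -
  have "(\<Sum>i<n. (r (xs i) + e i)\<^sup>2) = (\<Sum>i<n. (r (xs i))\<^sup>2) + 2 * (\<Sum>i<n. r (xs i) * e i) + (\<Sum>i<n. (e i)\<^sup>2)"
    unfolding sum_distrib_left sum.distrib[symmetric] by (simp add: power2_sum algebra_simps)
  then show ?thesis
    unfolding sum_sample_eq_cells[OF assms, of "\<lambda>x. (r x)\<^sup>2"] sum_sample_mult_eq_cells[OF assms, of r] .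
qed

lemma sum_sample_cross_eq_cells:
  assumes "\<forall>i<n. xs i \<in> X" "finite X"
  shows "(\<Sum>i<n. (r (xs i) + e i) * h (xs i))
           = (\<Sum>x\<in>X. h x * (r x * real (cell_count xs n x) + cell_sum xs e n x))"
proof -
  have "(\<Sum>i<n. (r (xs i) + e i) * h (xs i)) = (\<Sum>i<n. h (xs i) * r (xs i)) + (\<Sum>i<n. h (xs i) * e i)"
    unfolding sum.distrib[symmetric] by (simp add: algebra_simps)
  then show ?thesis
    unfolding sum_sample_eq_cells[OF assms, of "\<lambda>x. h x * r x"] sum_sample_mult_eq_cells[OF assms, of h]
    by (simp add: sum.distrib[symmetric] algebra_simps)
qed

lemma balanced_sample_cell_count_ge:
  assumes "balanced_sample \<nu> C n xs e" "x \<in> set_pmf \<nu>" "m \<le> pmf \<nu> x"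
    and "C * sqrt (real n) \<le> real n * m / 2"
  shows "real n * m / 2 \<le> real (cell_count xs n x)"
proof -
  have "real n * m \<le> real n * pmf \<nu> x"
    using assms(3) by (simp add: mult_left_mono)
  moreover have "real n * pmf \<nu> x - C * sqrt (real n) \<le> real (cell_count xs n x)"
    using assms(1,2) unfolding balanced_sample_def by (auto simp: abs_le_iff)
  ultimately show ?thesis
    using assms(4) by linarith
qed

lemma sqrt_le_half_linear:
  assumes "m > 0" "(2 * C / m)\<^sup>2 < real n"
  shows "C * sqrt (real n) \<le> real n * m / 2"
proof -
  have "2 * C / m \<le> sqrt (real n)"
    using assms(2) by (intro real_le_rsqrt) simp
  then have "2 * C * sqrt (real n) \<le> m * sqrt (real n) * sqrt (real n)"
    using assms(1) by (intro mult_right_mono) (auto simp: field_simps)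
  moreover have "m * sqrt (real n) * sqrt (real n) = real n * m"
    by (simp add: mult.assoc)
  ultimately show ?thesis by linarith
qed

lemma residual_pythagoras:
  fixes y p u h :: "nat \<Rightarrow> real"
  assumes "\<forall>i<n. y i - p i = u i - h i"
    and "(\<Sum>i<n. (y i - p i) * p i) = 0" "(\<Sum>i<n. (y i - p i) * h i) = 0"
  shows "(\<Sum>i<n. y i * (y i - p i)) = (\<Sum>i<n. (u i)\<^sup>2) - (\<Sum>i<n. (h i)\<^sup>2)"
    and "(\<Sum>i<n. (h i)\<^sup>2) = (\<Sum>i<n. u i * h i)"
proof -
  have "(\<Sum>i<n. (y i - p i) * h i) = (\<Sum>i<n. u i * h i) - (\<Sum>i<n. (h i)\<^sup>2)"
    unfolding sum_subtractf[symmetric]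
  proof (intro sum.cong refl)
    fix i assume "i \<in> {..<n}"
    then have "y i - p i = u i - h i" using assms(1) by simp
    then show "(y i - p i) * h i = u i * h i - (h i)\<^sup>2"
      by (simp add: power2_eq_square left_diff_distrib)
  qed
  then show uh: "(\<Sum>i<n. (h i)\<^sup>2) = (\<Sum>i<n. u i * h i)"
    using assms(3) by simp
  have "(\<Sum>i<n. y i * (y i - p i)) = (\<Sum>i<n. (y i - p i)\<^sup>2) + (\<Sum>i<n. (y i - p i) * p i)"
    by (simp add: sum.distrib[symmetric] power2_eq_square algebra_simps)
  also have "\<dots> = (\<Sum>i<n. (u i - h i)\<^sup>2)"
    using assms by simp
  also have "\<dots> = (\<Sum>i<n. (u i)\<^sup>2) - 2 * (\<Sum>i<n. u i * h i) + (\<Sum>i<n. (h i)\<^sup>2)"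
    by (simp add: sum_distrib_left sum_subtractf[symmetric] sum.distrib[symmetric] power2_eq_square algebra_simps)
  finally show "(\<Sum>i<n. y i * (y i - p i)) = (\<Sum>i<n. (u i)\<^sup>2) - (\<Sum>i<n. (h i)\<^sup>2)"
    using uh by simp
qed

lemma quadratic_sandwich_bound:
  fixes Q H a b :: real
  assumes "a > 0" "H \<ge> 0" "a * H\<^sup>2 \<le> Q" "Q \<le> b * H"
  shows "Q \<le> b\<^sup>2 / a"
proof (cases "H = 0")
  case True
  then show ?thesis using assms by simp
next
  case False
  have "(a * H) * H \<le> b * H"
    using assms by (simp add: power2_eq_square)
  then have "a * H \<le> b"
    using assms False by (simp add: mult_le_cancel_right)
  moreover have "0 \<le> a * H"
    using assms by simp
  ultimately have "0 \<le> b"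
    by linarith
  moreover have "H \<le> b / a"
    using \<open>a * H \<le> b\<close> assms(1) by (simp add: field_simps)
  ultimately have "b * H \<le> b * (b / a)"
    by (rule mult_left_mono[rotated])
  then show ?thesis
    using assms by (simp add: power2_eq_square)
qed

lemma sum_abs_sq_le_weighted_sum_sq:
  fixes h N :: "'a \<Rightarrow> real"
  assumes X: "finite X" and a: "0 \<le> a" "\<forall>x\<in>X. a \<le> N x"
  shows "a / card X * (\<Sum>x\<in>X. \<bar>h x\<bar>)\<^sup>2 \<le> (\<Sum>x\<in>X. (h x)\<^sup>2 * N x)"
proof (cases "X = {}")
  case True
  then show ?thesis by simp
next
  case False
  then have card_pos: "card X > 0"
    using X by (simp add: card_gt_0_iff)
  have "(\<Sum>x\<in>X. \<bar>h x\<bar>)\<^sup>2 \<le> card X * (\<Sum>x\<in>X. (h x)\<^sup>2)"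
    using sum_squared_le_sum_of_squares[of "\<lambda>x. \<bar>h x\<bar>" X] by (simp add: ac_simps)
  then have "a / card X * (\<Sum>x\<in>X. \<bar>h x\<bar>)\<^sup>2 \<le> a * (\<Sum>x\<in>X. (h x)\<^sup>2)"
    using a(1) card_pos by (simp add: field_simps mult_left_mono)
  also have "\<dots> \<le> (\<Sum>x\<in>X. (h x)\<^sup>2 * N x)"
    unfolding sum_distrib_left using a(2) by (intro sum_mono) (simp add: mult_right_mono mult.commute)
  finally show ?thesis .
qed

text \<open>Write \<open>Q\<close> for the left-hand side and \<open>H = (\<Sum>x\<in>X. \<bar>h x\<bar>)\<close>. By the identity for \<open>Q\<close>
  and the \<open>p\<close>-orthogonality of \<open>r\<close> and \<open>h\<close>, only the fluctuations \<open>N - p\<close> and \<open>s\<close> survive,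
  so \<open>Q \<le> c (\<Sum>\<bar>r\<bar> + 1) H\<close>; together with \<open>a H\<^sup>2 / card X \<le> Q\<close> this bounds \<open>Q\<close>.\<close>
lemma cellwise_quadratic_bound:
  fixes N p r s h :: "'a \<Rightarrow> real"
  assumes X: "finite X" and a: "a > 0" "\<forall>x\<in>X. a \<le> N x"
    and dev: "\<forall>x\<in>X. \<bar>N x - p x\<bar> \<le> c" "\<forall>x\<in>X. \<bar>s x\<bar> \<le> c"
    and orth: "(\<Sum>x\<in>X. p x * r x * h x) = 0"
    and Q: "(\<Sum>x\<in>X. (h x)\<^sup>2 * N x) = (\<Sum>x\<in>X. h x * (r x * N x + s x))"
  shows "(\<Sum>x\<in>X. (h x)\<^sup>2 * N x) \<le> card X * (c * ((\<Sum>x\<in>X. \<bar>r x\<bar>) + 1))\<^sup>2 / a"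
proof (cases "X = {}")
  case True
  then show ?thesis by simp
next
  case False
  define H where "H = (\<Sum>x\<in>X. \<bar>h x\<bar>)"
  define R where "R = (\<Sum>x\<in>X. \<bar>r x\<bar>)"
  have card_pos: "card X > 0" using X False by (simp add: card_gt_0_iff)
  have "(\<Sum>x\<in>X. (h x)\<^sup>2 * N x)
      = (\<Sum>x\<in>X. h x * r x * (N x - p x)) + (\<Sum>x\<in>X. h x * s x) + (\<Sum>x\<in>X. p x * r x * h x)"
    unfolding Q by (simp add: sum.distrib[symmetric] algebra_simps)
  also have "\<dots> \<le> (\<Sum>x\<in>X. \<bar>h x\<bar> * R * c) + (\<Sum>x\<in>X. \<bar>h x\<bar> * c)"
  proof -
    have "h x * r x * (N x - p x) \<le> \<bar>h x\<bar> * R * c" if "x \<in> X" for x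
    proof -
      have "\<bar>r x\<bar> \<le> R" unfolding R_def using X that by (intro member_le_sum) auto
      then have "\<bar>h x\<bar> * \<bar>r x\<bar> * \<bar>N x - p x\<bar> \<le> \<bar>h x\<bar> * R * c"
        using dev(1) that by (intro mult_mono) (auto intro: mult_left_mono)
      then show ?thesis by (metis abs_ge_self abs_mult order_trans)
    qed
    moreover have "h x * s x \<le> \<bar>h x\<bar> * c" if "x \<in> X" for x
      using dev(2) that by (metis abs_ge_self abs_mult mult_left_mono abs_ge_zero order_trans)
    ultimately show ?thesis
      using orth by (simp add: add_mono sum_mono)
  qed
  also have "\<dots> = (c * (R + 1)) * H"
    unfolding H_def by (simp add: sum_distrib_left sum_distrib_right sum.distrib[symmetric] algebra_simps)
  finally have upper: "(\<Sum>x\<in>X. (h x)\<^sup>2 * N x) \<le> (c * (R + 1)) * H" .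
  have lower: "a / card X * H\<^sup>2 \<le> (\<Sum>x\<in>X. (h x)\<^sup>2 * N x)"
    unfolding H_def using sum_abs_sq_le_weighted_sum_sq[OF X] a by simp
  have "(\<Sum>x\<in>X. (h x)\<^sup>2 * N x) \<le> (c * (R + 1))\<^sup>2 / (a / card X)"
    using a card_pos lower upper unfolding H_def by (intro quadratic_sandwich_bound) auto
  then show ?thesis
    unfolding R_def by (simp add: ac_simps)
qed

text \<open>The witness \<open>h\<close> is the sample least-squares fit minus the \<open>L\<^sup>2(\<nu>)\<close> projection of \<open>f\<close>.
  Lying in \<open>F(E)\<close>, it is \<open>\<nu>\<close>-orthogonal to the population residual \<open>r\<close>, and the sample
  normal equations give the second identity.\<close>
lemma rss_decomposition:
  fixes f :: "(nat \<Rightarrow> nat) \<Rightarrow> real" and xs :: "nat \<Rightarrow> nat \<Rightarrow> nat" and e :: "nat \<Rightarrow> real" and E :: "tree list"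
  assumes setp: "set_pmf \<nu> = grid B d" and xs_in: "\<forall>i<n. xs i \<in> grid B d"
  defines "r \<equiv> \<lambda>x. f x - proj \<nu> B d E f x"
    and "N \<equiv> \<lambda>x. real (cell_count xs n x)" and "S \<equiv> cell_sum xs e n"
  shows "\<exists>h. (\<Sum>x\<in>grid B d. pmf \<nu> x * r x * h x) = 0
           \<and> (\<Sum>x\<in>grid B d. (h x)\<^sup>2 * N x) = (\<Sum>x\<in>grid B d. h x * (r x * N x + S x))
           \<and> rss B d E n xs (\<lambda>i. f (xs i) + e i)
               = (\<Sum>x\<in>grid B d. (r x)\<^sup>2 * N x) + 2 * (\<Sum>x\<in>grid B d. r x * S x) + (\<Sum>i<n. (e i)\<^sup>2)
                 - (\<Sum>x\<in>grid B d. (h x)\<^sup>2 * N x)"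
proof -
  let ?X = "grid B d" and ?Lv = "ens_leaves B d E" and ?y = "\<lambda>i. f (xs i) + e i"
  define P where "P = projmat B d E n xs ?y"
  obtain c where proj_eq: "proj \<nu> B d E f = lincomb ?Lv indicator c"
    and orth_pop: "\<forall>c'. (\<Sum>x\<in>?X. pmf \<nu> x * (f x - proj \<nu> B d E f x) * lincomb ?Lv indicator c' x) = 0"
    using proj_characterization[OF setp] by blast
  obtain cP where P_eq: "\<forall>i<n. P i = lincomb ?Lv indicator cP (xs i)"
    and orth_sample: "\<forall>c'. (\<Sum>i<n. (?y i - P i) * lincomb ?Lv indicator c' (xs i)) = 0"
    using projmat_characterization unfolding P_def by blast
  define h where "h = lincomb ?Lv indicator (\<lambda>L. cP L - c L)"
  define u where "u i = r (xs i) + e i" for i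
  have resid: "\<forall>i<n. ?y i - P i = u i - h (xs i)"
    using P_eq by (simp add: u_def r_def h_def proj_eq lincomb_diff)
  have "(\<Sum>i<n. (?y i - P i) * P i) = (\<Sum>i<n. (?y i - P i) * lincomb ?Lv indicator cP (xs i))"
    using P_eq by (intro sum.cong) simp_all
  then have orth_P: "(\<Sum>i<n. (?y i - P i) * P i) = 0"
    using orth_sample by simp
  have orth_h: "(\<Sum>i<n. (?y i - P i) * h (xs i)) = 0"
    using orth_sample unfolding h_def by blast
  note pythagoras = residual_pythagoras[OF resid orth_P orth_h]
  have fin: "finite ?X" by (rule finite_grid)
  note u_sq = sum_sq_sample_eq_cells[OF xs_in fin, of r e]
  note uh = sum_sample_cross_eq_cells[OF xs_in fin, of r e h]
  have h_sq: "(\<Sum>i<n. (h (xs i))\<^sup>2) = (\<Sum>x\<in>?X. (h x)\<^sup>2 * N x)"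
    unfolding N_def by (rule sum_sample_eq_cells[OF xs_in fin])
  have "(\<Sum>x\<in>?X. pmf \<nu> x * r x * h x) = 0"
    using orth_pop unfolding r_def h_def by blast
  then show ?thesis
    using pythagoras u_sq h_sq uh unfolding rss_def P_def u_def N_def S_def by (intro exI[of _ h]) simp
qed

lemma rss_expansion:
  fixes f :: "(nat \<Rightarrow> nat) \<Rightarrow> real" and xs :: "nat \<Rightarrow> nat \<Rightarrow> nat" and e :: "nat \<Rightarrow> real" and E :: "tree list"
    and C m :: real and r :: "(nat \<Rightarrow> nat) \<Rightarrow> real"
  assumes setp: "set_pmf \<nu> = grid B d" and bal: "balanced_sample \<nu> C n xs e"
    and m: "m > 0" "\<forall>x\<in>grid B d. m \<le> pmf \<nu> x" and n_large: "(2 * C / m)\<^sup>2 < real n"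
  defines "r \<equiv> \<lambda>x. f x - proj \<nu> B d E f x"
  shows "\<exists>Q. 0 \<le> Q \<and> Q \<le> 2 * card (grid B d) * C\<^sup>2 * ((\<Sum>x\<in>grid B d. \<bar>r x\<bar>) + 1)\<^sup>2 / m \<and>
     rss B d E n xs (\<lambda>i. f (xs i) + e i)
       = (\<Sum>x\<in>grid B d. (r x)\<^sup>2 * real (cell_count xs n x)) + 2 * (\<Sum>x\<in>grid B d. r x * cell_sum xs e n x)
         + (\<Sum>i<n. (e i)\<^sup>2) - Q"
proof -
  let ?X = "grid B d" and ?N = "\<lambda>x. real (cell_count xs n x)"
  have xs_in: "\<forall>i<n. xs i \<in> ?X"
    and dev: "\<forall>x\<in>?X. \<bar>?N x - real n * pmf \<nu> x\<bar> \<le> C * sqrt (real n) \<and> \<bar>cell_sum xs e n x\<bar> \<le> C * sqrt (real n)"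
    using bal setp unfolding balanced_sample_def by auto
  obtain h where orth: "(\<Sum>x\<in>?X. pmf \<nu> x * r x * h x) = 0"
    and Q_eq: "(\<Sum>x\<in>?X. (h x)\<^sup>2 * ?N x) = (\<Sum>x\<in>?X. h x * (r x * ?N x + cell_sum xs e n x))"
    and rss_eq: "rss B d E n xs (\<lambda>i. f (xs i) + e i)
       = (\<Sum>x\<in>?X. (r x)\<^sup>2 * ?N x) + 2 * (\<Sum>x\<in>?X. r x * cell_sum xs e n x) + (\<Sum>i<n. (e i)\<^sup>2)
         - (\<Sum>x\<in>?X. (h x)\<^sup>2 * ?N x)"
    using rss_decomposition[OF setp xs_in] unfolding r_def by blast
  have n_pos: "real n > 0"
    using n_large by (meson le_less_trans zero_le_power2)
  have sqrt_small: "C * sqrt (real n) \<le> real n * m / 2"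
    using sqrt_le_half_linear[OF m(1) n_large] .
  have N_large: "\<forall>x\<in>?X. real n * m / 2 \<le> ?N x"
    using balanced_sample_cell_count_ge[OF bal] setp m(2) sqrt_small by blast
  have "(\<Sum>x\<in>?X. real n * pmf \<nu> x * r x * h x) = real n * (\<Sum>x\<in>?X. pmf \<nu> x * r x * h x)"
    by (simp add: sum_distrib_left mult.assoc)
  then have orth_n: "(\<Sum>x\<in>?X. real n * pmf \<nu> x * r x * h x) = 0"
    using orth by simp
  have "(\<Sum>x\<in>?X. (h x)\<^sup>2 * ?N x)
      \<le> card ?X * (C * sqrt (real n) * ((\<Sum>x\<in>?X. \<bar>r x\<bar>) + 1))\<^sup>2 / (real n * m / 2)"
    using dev n_pos m(1)
    by (intro cellwise_quadratic_bound[OF finite_grid _ N_large _ _ orth_n Q_eq]) auto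
  also have "\<dots> = 2 * card ?X * C\<^sup>2 * ((\<Sum>x\<in>?X. \<bar>r x\<bar>) + 1)\<^sup>2 / m"
    using n_pos m(1) by (simp add: power_mult_distrib)
  finally show ?thesis
    using rss_eq by (intro exI[of _ "\<Sum>x\<in>?X. (h x)\<^sup>2 * ?N x"]) (auto intro: sum_nonneg)
qed

lemma abs_sum_mult_le:
  fixes w u :: "'a \<Rightarrow> real"
  assumes "finite X" "\<forall>x\<in>X. \<bar>u x\<bar> \<le> c"
  shows "\<bar>\<Sum>x\<in>X. w x * u x\<bar> \<le> (\<Sum>x\<in>X. \<bar>w x\<bar>) * c"
proof -
  have "\<bar>\<Sum>x\<in>X. w x * u x\<bar> \<le> (\<Sum>x\<in>X. \<bar>w x\<bar> * \<bar>u x\<bar>)"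
    using sum_abs[of "\<lambda>x. w x * u x" X] by (simp add: abs_mult)
  also have "\<dots> \<le> (\<Sum>x\<in>X. \<bar>w x\<bar> * c)"
    using assms(2) by (intro sum_mono mult_left_mono) auto
  finally show ?thesis
    by (simp add: sum_distrib_right)
qed

lemma bias2_eq_sum:
  assumes "set_pmf \<nu> = grid B d"
  shows "bias2 \<nu> B d E f = (\<Sum>x\<in>grid B d. pmf \<nu> x * (f x - proj \<nu> B d E f x)\<^sup>2)"
  unfolding bias2_def using expectation_eq_sum_set_pmf[of \<nu>] assms finite_grid by simp

lemma cell_expansion_diff:
  fixes r r' N S p :: "'a \<Rightarrow> real"
  shows "((\<Sum>x\<in>X. (r x)\<^sup>2 * N x) + 2 * (\<Sum>x\<in>X. r x * S x) + Z - Q)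
       - ((\<Sum>x\<in>X. (r' x)\<^sup>2 * N x) + 2 * (\<Sum>x\<in>X. r' x * S x) + Z - Q')
       - c * ((\<Sum>x\<in>X. p x * (r x)\<^sup>2) - (\<Sum>x\<in>X. p x * (r' x)\<^sup>2))
     = (\<Sum>x\<in>X. ((r x)\<^sup>2 - (r' x)\<^sup>2) * (N x - c * p x)) + 2 * (\<Sum>x\<in>X. (r x - r' x) * S x) - Q + Q'"
proof -
  have "(\<Sum>x\<in>X. ((r x)\<^sup>2 - (r' x)\<^sup>2) * (N x - c * p x))
      = (\<Sum>x\<in>X. (r x)\<^sup>2 * N x) - (\<Sum>x\<in>X. (r' x)\<^sup>2 * N x)
        - c * ((\<Sum>x\<in>X. p x * (r x)\<^sup>2) - (\<Sum>x\<in>X. p x * (r' x)\<^sup>2))"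
    unfolding right_diff_distrib sum_distrib_left sum_subtractf[symmetric]
    by (intro sum.cong refl) (simp add: algebra_simps)
  moreover have "(\<Sum>x\<in>X. (r x - r' x) * S x) = (\<Sum>x\<in>X. r x * S x) - (\<Sum>x\<in>X. r' x * S x)"
    unfolding left_diff_distrib sum_subtractf ..
  ultimately show ?thesis
    by simp
qed

lemma rss_diff_bias_bound:
  fixes f :: "(nat \<Rightarrow> nat) \<Rightarrow> real" and C m :: real
  assumes setp: "set_pmf \<nu> = grid B d" and m: "m > 0" "\<forall>x\<in>grid B d. m \<le> pmf \<nu> x"
  shows "\<exists>W. \<forall>n xs e. (2 * C / m)\<^sup>2 < real n \<longrightarrow> balanced_sample \<nu> C n xs e \<longrightarrow>
     \<bar>rss B d E n xs (\<lambda>i. f (xs i) + e i) - rss B d E' n xs (\<lambda>i. f (xs i) + e i)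
      - real n * (bias2 \<nu> B d E f - bias2 \<nu> B d E' f)\<bar> \<le> W * sqrt (real n)"
proof -
  let ?X = "grid B d"
  define r where "r x = f x - proj \<nu> B d E f x" for x
  define r' where "r' x = f x - proj \<nu> B d E' f x" for x
  define K where "K = 2 * card ?X * C\<^sup>2 * ((\<Sum>x\<in>?X. \<bar>r x\<bar>) + 1)\<^sup>2 / m"
  define K' where "K' = 2 * card ?X * C\<^sup>2 * ((\<Sum>x\<in>?X. \<bar>r' x\<bar>) + 1)\<^sup>2 / m"
  define T1 where "T1 = (\<Sum>x\<in>?X. \<bar>(r x)\<^sup>2 - (r' x)\<^sup>2\<bar>)"
  define T2 where "T2 = (\<Sum>x\<in>?X. \<bar>r x - r' x\<bar>)"
  show ?thesis
  proof (intro exI[of _ "C * T1 + 2 * C * T2 + K + K'"] allI impI)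
    fix n xs e
    assume n_large: "(2 * C / m)\<^sup>2 < real n" and bal: "balanced_sample \<nu> C n xs e"
    let ?N = "\<lambda>x. real (cell_count xs n x)" and ?S = "cell_sum xs e n"
    let ?sn = "sqrt (real n)"
    obtain Q where Q: "0 \<le> Q" "Q \<le> K"
      and rss: "rss B d E n xs (\<lambda>i. f (xs i) + e i)
         = (\<Sum>x\<in>?X. (r x)\<^sup>2 * ?N x) + 2 * (\<Sum>x\<in>?X. r x * ?S x) + (\<Sum>i<n. (e i)\<^sup>2) - Q"
      using rss_expansion[OF setp bal m n_large] unfolding r_def K_def by blast
    obtain Q' where Q': "0 \<le> Q'" "Q' \<le> K'"
      and rss': "rss B d E' n xs (\<lambda>i. f (xs i) + e i)
         = (\<Sum>x\<in>?X. (r' x)\<^sup>2 * ?N x) + 2 * (\<Sum>x\<in>?X. r' x * ?S x) + (\<Sum>i<n. (e i)\<^sup>2) - Q'"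
      using rss_expansion[OF setp bal m n_large] unfolding r'_def K'_def by blast
    have dev: "\<forall>x\<in>?X. \<bar>?N x - real n * pmf \<nu> x\<bar> \<le> C * ?sn" "\<forall>x\<in>?X. \<bar>?S x\<bar> \<le> C * ?sn"
      using bal setp unfolding balanced_sample_def by auto
    have "0 < real n"
      using n_large by (meson le_less_trans zero_le_power2)
    then have sn: "1 \<le> ?sn"
      by simp
    have "rss B d E n xs (\<lambda>i. f (xs i) + e i) - rss B d E' n xs (\<lambda>i. f (xs i) + e i)
          - real n * (bias2 \<nu> B d E f - bias2 \<nu> B d E' f)
        = (\<Sum>x\<in>?X. ((r x)\<^sup>2 - (r' x)\<^sup>2) * (?N x - real n * pmf \<nu> x))
          + 2 * (\<Sum>x\<in>?X. (r x - r' x) * ?S x) - Q + Q'"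
      unfolding rss rss' bias2_eq_sum[OF setp] r_def[symmetric] r'_def[symmetric]
      by (rule cell_expansion_diff)
    also have "\<bar>\<dots>\<bar> \<le> T1 * (C * ?sn) + 2 * (T2 * (C * ?sn)) + (K + K')"
      using abs_sum_mult_le[OF finite_grid dev(1), of "\<lambda>x. (r x)\<^sup>2 - (r' x)\<^sup>2"]
        abs_sum_mult_le[OF finite_grid dev(2), of "\<lambda>x. r x - r' x"] Q Q'
      unfolding T1_def T2_def by arith
    also have "\<dots> \<le> (C * T1 + 2 * C * T2 + K + K') * ?sn"
    proof -
      have "(K + K') * 1 \<le> (K + K') * ?sn"
        using sn Q Q' by (intro mult_left_mono) auto
      then show ?thesis by (simp add: algebra_simps)
    qed
    finally show "\<bar>rss B d E n xs (\<lambda>i. f (xs i) + e i) - rss B d E' n xs (\<lambda>i. f (xs i) + e i)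
      - real n * (bias2 \<nu> B d E f - bias2 \<nu> B d E' f)\<bar> \<le> (C * T1 + 2 * C * T2 + K + K') * ?sn" .
  qed
qed

lemma rss_diff_bound_of_proj_eq:
  fixes f :: "(nat \<Rightarrow> nat) \<Rightarrow> real" and C m :: real
  assumes setp: "set_pmf \<nu> = grid B d" and m: "m > 0" "\<forall>x\<in>grid B d. m \<le> pmf \<nu> x"
    and proj_eq: "\<forall>x\<in>grid B d. proj \<nu> B d E f x = proj \<nu> B d E' f x"
  shows "\<exists>W. \<forall>n xs e. (2 * C / m)\<^sup>2 < real n \<longrightarrow> balanced_sample \<nu> C n xs e \<longrightarrow>
     \<bar>rss B d E n xs (\<lambda>i. f (xs i) + e i) - rss B d E' n xs (\<lambda>i. f (xs i) + e i)\<bar> \<le> W"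
proof -
  let ?X = "grid B d"
  define r where "r x = f x - proj \<nu> B d E f x" for x
  define r' where "r' x = f x - proj \<nu> B d E' f x" for x
  define K where "K = 2 * card ?X * C\<^sup>2 * ((\<Sum>x\<in>?X. \<bar>r x\<bar>) + 1)\<^sup>2 / m"
  have r_eq: "\<forall>x\<in>?X. r' x = r x"
    using proj_eq unfolding r_def r'_def by simp
  show ?thesis
  proof (intro exI[of _ "2 * K"] allI impI)
    fix n xs e
    assume n_large: "(2 * C / m)\<^sup>2 < real n" and bal: "balanced_sample \<nu> C n xs e"
    let ?N = "\<lambda>x. real (cell_count xs n x)" and ?S = "cell_sum xs e n"
    obtain Q where Q: "0 \<le> Q" "Q \<le> K"
      and rss: "rss B d E n xs (\<lambda>i. f (xs i) + e i)
         = (\<Sum>x\<in>?X. (r x)\<^sup>2 * ?N x) + 2 * (\<Sum>x\<in>?X. r x * ?S x) + (\<Sum>i<n. (e i)\<^sup>2) - Q"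
      using rss_expansion[OF setp bal m n_large] unfolding r_def K_def by blast
    have same_sums: "(\<Sum>x\<in>?X. (r' x)\<^sup>2 * ?N x) = (\<Sum>x\<in>?X. (r x)\<^sup>2 * ?N x)"
        "(\<Sum>x\<in>?X. r' x * ?S x) = (\<Sum>x\<in>?X. r x * ?S x)"
        "(\<Sum>x\<in>?X. \<bar>r' x\<bar>) = (\<Sum>x\<in>?X. \<bar>r x\<bar>)"
      using r_eq by (auto intro: sum.cong)
    obtain Q' where Q': "0 \<le> Q'" "Q' \<le> K"
      and rss': "rss B d E' n xs (\<lambda>i. f (xs i) + e i)
         = (\<Sum>x\<in>?X. (r x)\<^sup>2 * ?N x) + 2 * (\<Sum>x\<in>?X. r x * ?S x) + (\<Sum>i<n. (e i)\<^sup>2) - Q'"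
      using rss_expansion[OF setp bal m n_large, of f E'] unfolding r'_def[symmetric] same_sums K_def
      by blast
    show "\<bar>rss B d E n xs (\<lambda>i. f (xs i) + e i) - rss B d E' n xs (\<lambda>i. f (xs i) + e i)\<bar> \<le> 2 * K"
      unfolding rss rss' using Q Q' by simp
  qed
qed

lemma ln_le_two_sqrt:
  assumes "0 < x"
  shows "ln x \<le> 2 * sqrt x"
proof -
  have "ln (sqrt x) \<le> sqrt x - 1"
    using assms by (intro ln_le_minus_one) auto
  then show ?thesis
    using assms by (simp add: ln_sqrt)
qed

lemma BIC_diff_bias_bound:
  fixes f :: "(nat \<Rightarrow> nat) \<Rightarrow> real" and C m :: real
  assumes setp: "set_pmf \<nu> = grid B d" and m: "m > 0" "\<forall>x\<in>grid B d. m \<le> pmf \<nu> x"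
    and \<sigma>2: "\<sigma>2 > 0"
  shows "\<exists>N K. \<forall>n xs e. N < real n \<longrightarrow> balanced_sample \<nu> C n xs e \<longrightarrow>
     \<bar>BIC \<sigma>2 B d E n xs (\<lambda>i. f (xs i) + e i) - BIC \<sigma>2 B d E' n xs (\<lambda>i. f (xs i) + e i)
      - real n / \<sigma>2 * (bias2 \<nu> B d E f - bias2 \<nu> B d E' f)\<bar> \<le> K * sqrt (real n)"
proof -
  obtain W where W: "\<forall>n xs e. (2 * C / m)\<^sup>2 < real n \<longrightarrow> balanced_sample \<nu> C n xs e \<longrightarrow>
     \<bar>rss B d E n xs (\<lambda>i. f (xs i) + e i) - rss B d E' n xs (\<lambda>i. f (xs i) + e i)
      - real n * (bias2 \<nu> B d E f - bias2 \<nu> B d E' f)\<bar> \<le> W * sqrt (real n)"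
    using rss_diff_bias_bound[OF setp m, where f=f and C=C and E=E and E'=E'] by blast
  define \<Delta>df where "\<Delta>df = real (df B d E) - real (df B d E')"
  show ?thesis
  proof (rule exI[of _ "(2 * C / m)\<^sup>2"], rule exI[of _ "W / \<sigma>2 + 2 * \<bar>\<Delta>df\<bar>"], intro allI impI)
    fix n xs e
    assume n: "(2 * C / m)\<^sup>2 < real n" and bal: "balanced_sample \<nu> C n xs e"
    let ?y = "\<lambda>i. f (xs i) + e i"
    define D where "D = rss B d E n xs ?y - rss B d E' n xs ?y - real n * (bias2 \<nu> B d E f - bias2 \<nu> B d E' f)"
    have n_pos: "0 < real n"
      using n by (meson le_less_trans zero_le_power2)
    have D: "\<bar>D\<bar> \<le> W * sqrt (real n)"
      using W n bal unfolding D_def by blast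
    have "BIC \<sigma>2 B d E n xs ?y - BIC \<sigma>2 B d E' n xs ?y - real n / \<sigma>2 * (bias2 \<nu> B d E f - bias2 \<nu> B d E' f)
        = D / \<sigma>2 + \<Delta>df * ln (real n)"
      unfolding BIC_diff \<Delta>df_def D_def by (simp add: diff_divide_distrib)
    moreover have "\<bar>D / \<sigma>2 + \<Delta>df * ln (real n)\<bar> \<le> \<bar>D\<bar> / \<sigma>2 + \<bar>\<Delta>df\<bar> * ln (real n)"
      using \<sigma>2 n_pos abs_triangle_ineq[of "D / \<sigma>2" "\<Delta>df * ln (real n)"] by (simp add: abs_mult abs_divide)
    moreover have "\<bar>D\<bar> / \<sigma>2 \<le> W * sqrt (real n) / \<sigma>2"
      using D \<sigma>2 by (simp add: divide_right_mono)
    moreover have "\<bar>\<Delta>df\<bar> * ln (real n) \<le> \<bar>\<Delta>df\<bar> * (2 * sqrt (real n))"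
      using ln_le_two_sqrt[OF n_pos] by (simp add: mult_left_mono)
    moreover have "W * sqrt (real n) / \<sigma>2 + \<bar>\<Delta>df\<bar> * (2 * sqrt (real n)) = (W / \<sigma>2 + 2 * \<bar>\<Delta>df\<bar>) * sqrt (real n)"
      by (simp add: algebra_simps)
    ultimately show "\<bar>BIC \<sigma>2 B d E n xs ?y - BIC \<sigma>2 B d E' n xs ?y
        - real n / \<sigma>2 * (bias2 \<nu> B d E f - bias2 \<nu> B d E' f)\<bar> \<le> (W / \<sigma>2 + 2 * \<bar>\<Delta>df\<bar>) * sqrt (real n)"
      by linarith
  qed
qed

lemma BIC_diff_df_bound:
  fixes f :: "(nat \<Rightarrow> nat) \<Rightarrow> real" and C m :: real
  assumes setp: "set_pmf \<nu> = grid B d" and m: "m > 0" "\<forall>x\<in>grid B d. m \<le> pmf \<nu> x"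
    and \<sigma>2: "\<sigma>2 > 0" and proj_eq: "\<forall>x\<in>grid B d. proj \<nu> B d E f x = proj \<nu> B d E' f x"
  shows "\<exists>N K. \<forall>n xs e. N < real n \<longrightarrow> balanced_sample \<nu> C n xs e \<longrightarrow>
     \<bar>BIC \<sigma>2 B d E n xs (\<lambda>i. f (xs i) + e i) - BIC \<sigma>2 B d E' n xs (\<lambda>i. f (xs i) + e i)
      - (real (df B d E) - real (df B d E')) * ln (real n)\<bar> \<le> K"
proof -
  obtain W where W: "\<forall>n xs e. (2 * C / m)\<^sup>2 < real n \<longrightarrow> balanced_sample \<nu> C n xs e \<longrightarrow>
     \<bar>rss B d E n xs (\<lambda>i. f (xs i) + e i) - rss B d E' n xs (\<lambda>i. f (xs i) + e i)\<bar> \<le> W"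
    using rss_diff_bound_of_proj_eq[OF setp m proj_eq] by blast
  show ?thesis
  proof (rule exI[of _ "(2 * C / m)\<^sup>2"], rule exI[of _ "W / \<sigma>2"], intro allI impI)
    fix n xs e
    assume "(2 * C / m)\<^sup>2 < real n" "balanced_sample \<nu> C n xs e"
    then have "\<bar>rss B d E n xs (\<lambda>i. f (xs i) + e i) - rss B d E' n xs (\<lambda>i. f (xs i) + e i)\<bar> \<le> W"
      using W by blast
    then show "\<bar>BIC \<sigma>2 B d E n xs (\<lambda>i. f (xs i) + e i) - BIC \<sigma>2 B d E' n xs (\<lambda>i. f (xs i) + e i)
      - (real (df B d E) - real (df B d E')) * ln (real n)\<bar> \<le> W / \<sigma>2"
      using \<sigma>2 unfolding BIC_diff by (simp add: abs_divide divide_le_cancel)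
  qed
qed

section \<open>Balanced samples are likely\<close>

lemma iid_coordinate_product_integral:
  fixes f :: "'a \<Rightarrow> real" and I :: "'i set"
  assumes M: "prob_space M" and I: "finite I" "i \<in> I" "j \<in> I"
    and f: "integrable M f" "integrable M (\<lambda>x. (f x)\<^sup>2)"
  shows "integrable (PiM I (\<lambda>_. M)) (\<lambda>\<omega>. f (\<omega> i) * f (\<omega> j))"
    and "(\<integral>\<omega>. f (\<omega> i) * f (\<omega> j) \<partial>PiM I (\<lambda>_. M))
           = (if i = j then (\<integral>x. (f x)\<^sup>2 \<partial>M) else (\<integral>x. f x \<partial>M)\<^sup>2)"
proof -
  interpret M: prob_space M by (rule M)
  interpret product_prob_space "\<lambda>_. M" I
    by (intro product_prob_space.intro product_prob_space_axioms.intro product_sigma_finite.intro)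
       (auto simp: M M.sigma_finite_measure)
  \<comment> \<open>one product of coordinate factors covers both the diagonal and the off-diagonal case\<close>
  define g where "g = (if i = j then (\<lambda>x. (f x)\<^sup>2) else f)"
  define G where "G k = (if k \<in> {i, j} then g else (\<lambda>_. 1))" for k
  have ij: "{k \<in> I. k \<in> {i, j}} = {i, j}"
    using I by auto
  have prod_ij: "(\<Prod>k\<in>I. if k \<in> {i, j} then a k else 1) = (if i = j then a i else a i * a j)"
    for a :: "'i \<Rightarrow> real"
    unfolding prod.inter_filter[OF I(1), symmetric] ij by simp
  have G_integrable: "integrable M (G k)" for k
    using f unfolding G_def g_def by auto
  have "(\<Prod>k\<in>I. G k (\<omega> k)) = f (\<omega> i) * f (\<omega> j)" for \<omega>
    unfolding G_def if_distrib[of "\<lambda>h. h (\<omega> _)"] prod_ij by (simp add: g_def power2_eq_square)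
  moreover have G_integral: "integral\<^sup>L M (G k) = (if k \<in> {i, j} then integral\<^sup>L M g else 1)" for k
    by (simp add: G_def M.prob_space)
  have "(\<Prod>k\<in>I. integral\<^sup>L M (G k))
      = (if i = j then (\<integral>x. (f x)\<^sup>2 \<partial>M) else (\<integral>x. f x \<partial>M)\<^sup>2)"
    unfolding G_integral prod_ij by (simp add: g_def power2_eq_square)
  ultimately show "integrable (PiM I (\<lambda>_. M)) (\<lambda>\<omega>. f (\<omega> i) * f (\<omega> j))"
    and "(\<integral>\<omega>. f (\<omega> i) * f (\<omega> j) \<partial>PiM I (\<lambda>_. M))
           = (if i = j then (\<integral>x. (f x)\<^sup>2 \<partial>M) else (\<integral>x. f x \<partial>M)\<^sup>2)"
    using product_integrable_prod[where f=G, OF I(1) G_integrable]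
      product_integral_prod[where f=G, OF I(1) G_integrable]
    by simp_all
qed

lemma Chebyshev_inequality_iid_sum:
  fixes f :: "'a \<Rightarrow> real" and n :: nat
  assumes M: "prob_space M" and f: "integrable M (\<lambda>x. (f x)\<^sup>2)" "f \<in> borel_measurable M"
    and mean0: "(\<integral>x. f x \<partial>M) = 0" and a: "a > 0"
  defines "A \<equiv> {\<omega> \<in> space (PiM {..<n} (\<lambda>_. M)). a \<le> \<bar>\<Sum>i<n. f (\<omega> i)\<bar>}"
  shows "A \<in> sets (PiM {..<n} (\<lambda>_. M))"
    and "measure (PiM {..<n} (\<lambda>_. M)) A \<le> real n * (\<integral>x. (f x)\<^sup>2 \<partial>M) / a\<^sup>2"
proof -
  interpret M: prob_space M by (rule M)
  let ?P = "PiM {..<n} (\<lambda>_. M)"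
  have f_integrable: "integrable M f"
    using M.square_integrable_imp_integrable[OF f(2,1)] .
  define S where "S \<omega> = (\<Sum>i<n. f (\<omega> i))" for \<omega>
  have [measurable]: "S \<in> borel_measurable ?P"
    unfolding S_def using f(2) by (intro borel_measurable_sum) simp
  show "A \<in> sets ?P"
    unfolding A_def S_def[symmetric] by measurable
  note coord = iid_coordinate_product_integral[OF M finite_lessThan[of n] _ _ f_integrable f(1)]
  have S_sq: "(S \<omega>)\<^sup>2 = (\<Sum>i<n. \<Sum>j<n. f (\<omega> i) * f (\<omega> j))" for \<omega>
    unfolding S_def power2_eq_square by (simp add: sum_product)
  have S_sq_integrable: "integrable ?P (\<lambda>\<omega>. (S \<omega>)\<^sup>2)"
    unfolding S_sq using coord(1) by (intro Bochner_Integration.integrable_sum) auto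
  have "(\<integral>\<omega>. (S \<omega>)\<^sup>2 \<partial>?P) = (\<Sum>i<n. \<integral>\<omega>. (\<Sum>j<n. f (\<omega> i) * f (\<omega> j)) \<partial>?P)"
    unfolding S_sq using coord(1)
    by (intro Bochner_Integration.integral_sum Bochner_Integration.integrable_sum) auto
  also have "\<dots> = (\<Sum>i<n. \<Sum>j<n. \<integral>\<omega>. f (\<omega> i) * f (\<omega> j) \<partial>?P)"
    using coord(1) by (intro sum.cong refl Bochner_Integration.integral_sum) auto
  also have "\<dots> = real n * (\<integral>x. (f x)\<^sup>2 \<partial>M)"
    using coord(2) by (simp add: mean0 cong: if_cong)
  finally have S_sq_integral: "(\<integral>\<omega>. (S \<omega>)\<^sup>2 \<partial>?P) = real n * (\<integral>x. (f x)\<^sup>2 \<partial>M)" .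
  have "A = {\<omega> \<in> space ?P. a\<^sup>2 \<le> (S \<omega>)\<^sup>2}"
    using a unfolding A_def S_def by (auto simp flip: abs_le_square_iff)
  then show "measure ?P A \<le> real n * (\<integral>x. (f x)\<^sup>2 \<partial>M) / a\<^sup>2"
    using integral_Markov_inequality_measure[OF S_sq_integrable, of "space ?P" "a\<^sup>2"] a S_sq_integral
    by simp
qed

lemma pmf_pair_product_integral:
  fixes \<nu> :: "'a pmf" and g :: "'a \<Rightarrow> real" and h :: "real \<Rightarrow> real"
  assumes fin: "finite (set_pmf \<nu>)" and N: "prob_space N" and h: "integrable N h"
  shows "integrable (measure_pmf \<nu> \<Otimes>\<^sub>M N) (\<lambda>p. g (fst p) * h (snd p))"
    and "(\<integral>p. g (fst p) * h (snd p) \<partial>(measure_pmf \<nu> \<Otimes>\<^sub>M N))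
           = measure_pmf.expectation \<nu> g * (\<integral>e. h e \<partial>N)"
proof -
  interpret N: prob_space N by (rule N)
  interpret pair_sigma_finite "measure_pmf \<nu>" N
    by (intro pair_sigma_finite.intro) (auto simp: N.sigma_finite_measure prob_space_imp_sigma_finite prob_space_measure_pmf)
  have [measurable]: "h \<in> borel_measurable N" "g \<in> borel_measurable (measure_pmf \<nu>)"
    using h by auto
  show integrable: "integrable (measure_pmf \<nu> \<Otimes>\<^sub>M N) (\<lambda>p. g (fst p) * h (snd p))"
    by (rule Fubini_integrable) (auto intro: integrable_measure_pmf_finite[OF fin] h)
  show "(\<integral>p. g (fst p) * h (snd p) \<partial>(measure_pmf \<nu> \<Otimes>\<^sub>M N))
           = measure_pmf.expectation \<nu> g * (\<integral>e. h e \<partial>N)"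
    using integral_fst'[OF integrable] by simp
qed

lemma subgaussian_square_integrable:
  assumes "sets N = sets borel" and "subgaussian N"
  shows "integrable N (\<lambda>e. e\<^sup>2)"
proof -
  have exp_integrable: "integrable N (\<lambda>e. exp (l * e))" for l
    using assms(2) unfolding subgaussian_def by blast
  show ?thesis
  proof (rule Bochner_Integration.integrable_bound)
    show "integrable N (\<lambda>e. 2 * (exp e + exp (- e)))"
      using exp_integrable[of 1] exp_integrable[of "-1"] by simp
    show "(\<lambda>e. e\<^sup>2) \<in> borel_measurable N"
      by (subst measurable_cong_sets[OF assms(1) refl]) simp
    show "AE e in N. norm (e\<^sup>2) \<le> norm (2 * (exp e + exp (- e)))"
    proof (rule AE_I2)
      fix e :: real
      have "1 + \<bar>e\<bar> + \<bar>e\<bar>\<^sup>2 / 2 \<le> exp \<bar>e\<bar>"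
        by (rule exp_lower_Taylor_quadratic) simp
      also have "\<dots> \<le> exp e + exp (- e)"
        by (cases "e \<ge> 0") auto
      finally show "norm (e\<^sup>2) \<le> norm (2 * (exp e + exp (- e)))"
        by simp
    qed
  qed
qed

lemma data_sum_deviation:
  fixes \<nu> :: "(nat \<Rightarrow> nat) pmf" and g :: "(nat \<Rightarrow> nat) \<Rightarrow> real" and h :: "real \<Rightarrow> real"
    and a :: real and n :: nat
  assumes fin: "finite (set_pmf \<nu>)" and N: "prob_space N"
    and h: "integrable N h" "integrable N (\<lambda>e. (h e)\<^sup>2)"
    and mean0: "measure_pmf.expectation \<nu> g * (\<integral>e. h e \<partial>N) = 0" and a: "a > 0"
  defines "A \<equiv> {\<omega> \<in> space (data \<nu> N n). a \<le> \<bar>\<Sum>i<n. g (fst (\<omega> i)) * h (snd (\<omega> i))\<bar>}"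
  shows "A \<in> sets (data \<nu> N n)"
    and "measure (data \<nu> N n) A
           \<le> real n * (measure_pmf.expectation \<nu> (\<lambda>x. (g x)\<^sup>2) * (\<integral>e. (h e)\<^sup>2 \<partial>N)) / a\<^sup>2"
proof -
  let ?M = "measure_pmf \<nu> \<Otimes>\<^sub>M N"
  let ?f = "\<lambda>p. g (fst p) * h (snd p)"
  have M: "prob_space ?M"
    by (intro prob_space_pair N prob_space_measure_pmf)
  have "(\<lambda>p. (?f p)\<^sup>2) = (\<lambda>p. (g (fst p))\<^sup>2 * (h (snd p))\<^sup>2)"
    by (simp add: power_mult_distrib)
  then have f_sq: "integrable ?M (\<lambda>p. (?f p)\<^sup>2)"
      "(\<integral>p. (?f p)\<^sup>2 \<partial>?M) = measure_pmf.expectation \<nu> (\<lambda>x. (g x)\<^sup>2) * (\<integral>e. (h e)\<^sup>2 \<partial>N)"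
    using pmf_pair_product_integral[OF fin N h(2), of "\<lambda>x. (g x)\<^sup>2"] by simp_all
  have f_measurable: "?f \<in> borel_measurable ?M"
    using pmf_pair_product_integral(1)[OF fin N h(1)] by auto
  have f_mean: "(\<integral>p. ?f p \<partial>?M) = 0"
    using pmf_pair_product_integral(2)[OF fin N h(1)] mean0 by simp
  note Chebyshev = Chebyshev_inequality_iid_sum[OF M f_sq(1) f_measurable f_mean a, of n]
  show "A \<in> sets (data \<nu> N n)"
    using Chebyshev(1) unfolding A_def data_def by simp
  show "measure (data \<nu> N n) A
           \<le> real n * (measure_pmf.expectation \<nu> (\<lambda>x. (g x)\<^sup>2) * (\<integral>e. (h e)\<^sup>2 \<partial>N)) / a\<^sup>2"
    using Chebyshev(2) f_sq(2) unfolding A_def data_def by simp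
qed

lemma data_bounded_sum_deviation:
  fixes \<nu> :: "(nat \<Rightarrow> nat) pmf" and g :: "(nat \<Rightarrow> nat) \<Rightarrow> real" and h :: "real \<Rightarrow> real"
    and C :: real and n :: nat
  assumes fin: "finite (set_pmf \<nu>)" and N: "prob_space N" and g: "\<forall>y. \<bar>g y\<bar> \<le> 1"
    and h: "integrable N h" "integrable N (\<lambda>e. (h e)\<^sup>2)"
    and mean0: "measure_pmf.expectation \<nu> g * (\<integral>e. h e \<partial>N) = 0" and C: "C > 0" and n: "n > 0"
  defines "A \<equiv> {\<omega> \<in> space (data \<nu> N n). C * sqrt n \<le> \<bar>\<Sum>i<n. g (fst (\<omega> i)) * h (snd (\<omega> i))\<bar>}"
  shows "A \<in> sets (data \<nu> N n)" and "measure (data \<nu> N n) A \<le> (\<integral>e. (h e)\<^sup>2 \<partial>N) / C\<^sup>2"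
proof -
  have Cn: "C * sqrt n > 0"
    using C n by simp
  note deviation = data_sum_deviation[OF fin N h mean0 Cn, of n, folded A_def]
  show "A \<in> sets (data \<nu> N n)"
    by (rule deviation(1))
  have "measure_pmf.expectation \<nu> (\<lambda>y. (g y)\<^sup>2) \<le> 1"
    using g by (intro measure_pmf.integral_le_const integrable_measure_pmf_finite[OF fin] AE_I2)
      (simp add: abs_square_le_1)
  then have "real n * (measure_pmf.expectation \<nu> (\<lambda>y. (g y)\<^sup>2) * (\<integral>e. (h e)\<^sup>2 \<partial>N)) / (C * sqrt n)\<^sup>2
      \<le> real n * (1 * (\<integral>e. (h e)\<^sup>2 \<partial>N)) / (C * sqrt n)\<^sup>2"
    by (intro divide_right_mono mult_left_mono mult_right_mono) auto
  also have "\<dots> = (\<integral>e. (h e)\<^sup>2 \<partial>N) / C\<^sup>2"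
    using n by (simp add: power_mult_distrib)
  finally show "measure (data \<nu> N n) A \<le> (\<integral>e. (h e)\<^sup>2 \<partial>N) / C\<^sup>2"
    using deviation(2) by simp
qed

text \<open>Chebyshev with zero variance: the number of covariates outside the support has mean
  and second moment \<open>0\<close>.\<close>
lemma data_outside_support_null:
  fixes \<nu> :: "(nat \<Rightarrow> nat) pmf" and n :: nat
  assumes fin: "finite (set_pmf \<nu>)" and N: "prob_space N"
  defines "A \<equiv> {\<omega> \<in> space (data \<nu> N n). \<exists>i<n. fst (\<omega> i) \<notin> set_pmf \<nu>}"
  shows "A \<in> sets (data \<nu> N n)" and "measure (data \<nu> N n) A = 0"
proof -
  interpret N: prob_space N by (rule N)
  let ?out = "\<lambda>\<omega>. \<Sum>i<n. indicator (- set_pmf \<nu>) (fst (\<omega> i)) :: real"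
  have out_iff: "(\<exists>i<n. fst (\<omega> i) \<notin> set_pmf \<nu>) \<longleftrightarrow> 1 / 2 \<le> \<bar>?out \<omega>\<bar>" for \<omega>
  proof
    assume "\<exists>i<n. fst (\<omega> i) \<notin> set_pmf \<nu>"
    then show "1 / 2 \<le> \<bar>?out \<omega>\<bar>"
      using member_le_sum[of _ "{..<n}" "\<lambda>i. indicator (- set_pmf \<nu>) (fst (\<omega> i)) :: real"]
      by (force simp: indicator_def)
  next
    assume half: "1 / 2 \<le> \<bar>?out \<omega>\<bar>"
    show "\<exists>i<n. fst (\<omega> i) \<notin> set_pmf \<nu>"
    proof (rule ccontr)
      assume "\<not> (\<exists>i<n. fst (\<omega> i) \<notin> set_pmf \<nu>)"
      then have "?out \<omega> = 0"
        by (intro sum.neutral) auto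
      then show False
        using half by simp
    qed
  qed
  have outside_mean: "measure_pmf.expectation \<nu> (indicator (- set_pmf \<nu>) :: _ \<Rightarrow> real) * (\<integral>e. 1 \<partial>N) = 0"
    and outside_sq: "measure_pmf.expectation \<nu> (\<lambda>y. (indicator (- set_pmf \<nu>) y :: real)\<^sup>2) = 0"
    by (subst expectation_eq_sum_set_pmf[OF fin], simp)+
  have half: "(0::real) < 1 / 2"
    by simp
  note deviation = data_sum_deviation[OF fin N N.integrable_const N.integrable_const outside_mean half,
      where n = n]
  have A_eq: "A = {\<omega> \<in> space (data \<nu> N n).
      1 / 2 \<le> \<bar>\<Sum>i<n. indicator (- set_pmf \<nu>) (fst (\<omega> i)) * (\<lambda>_. 1 :: real) (snd (\<omega> i))\<bar>}"
    unfolding A_def out_iff by simp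
  show "A \<in> sets (data \<nu> N n)"
    unfolding A_eq by (rule deviation(1))
  have "measure (data \<nu> N n) A \<le> 0"
    unfolding A_eq using deviation(2) outside_sq by simp
  then show "measure (data \<nu> N n) A = 0"
    using measure_nonneg[of "data \<nu> N n" A] by linarith
qed

lemma cell_count_deviation:
  fixes \<nu> :: "(nat \<Rightarrow> nat) pmf" and C :: real and n :: nat
  assumes fin: "finite (set_pmf \<nu>)" and N: "prob_space N" and x: "x \<in> set_pmf \<nu>"
    and C: "C > 0" and n: "n > 0"
  defines "A \<equiv> {\<omega> \<in> space (data \<nu> N n). C * sqrt n \<le> \<bar>real (cell_count (covs \<omega>) n x) - real n * pmf \<nu> x\<bar>}"
  shows "A \<in> sets (data \<nu> N n)" and "measure (data \<nu> N n) A \<le> 1 / C\<^sup>2"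
proof -
  interpret N: prob_space N by (rule N)
  let ?g = "\<lambda>y. indicator {x} y - pmf \<nu> x"
  have "(\<Sum>y\<in>set_pmf \<nu>. pmf \<nu> y * indicator {x} y) = (\<Sum>y\<in>set_pmf \<nu>. if y = x then pmf \<nu> x else 0)"
    by (intro sum.cong) auto
  then have "(\<Sum>y\<in>set_pmf \<nu>. pmf \<nu> y * ?g y) = pmf \<nu> x - (\<Sum>y\<in>set_pmf \<nu>. pmf \<nu> y) * pmf \<nu> x"
    using fin x by (simp add: right_diff_distrib sum_subtractf sum_distrib_right)
  then have mean0: "measure_pmf.expectation \<nu> ?g * (\<integral>e. 1 \<partial>N) = 0"
    using fin by (simp add: expectation_eq_sum_set_pmf sum_pmf_eq_1)
  have "\<forall>y. \<bar>?g y\<bar> \<le> 1"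
    using pmf_le_1[of \<nu> x] by (simp add: indicator_def)
  note deviation = data_bounded_sum_deviation[OF fin N this N.integrable_const N.integrable_const mean0 C n]
  have "A = {\<omega> \<in> space (data \<nu> N n). C * sqrt n \<le> \<bar>\<Sum>i<n. ?g (fst (\<omega> i)) * (\<lambda>_. 1) (snd (\<omega> i))\<bar>}"
    unfolding A_def by (simp add: cell_count_eq_sum_indicator covs_def sum_subtractf)
  then show "A \<in> sets (data \<nu> N n)" "measure (data \<nu> N n) A \<le> 1 / C\<^sup>2"
    using deviation by (simp_all add: N.prob_space)
qed

lemma cell_noise_deviation:
  fixes \<nu> :: "(nat \<Rightarrow> nat) pmf" and x :: "nat \<Rightarrow> nat" and C :: real and n :: nat
  assumes fin: "finite (set_pmf \<nu>)" and N: "prob_space N" and "centered N"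
    and N_sq: "integrable N (\<lambda>e. e\<^sup>2)" and C: "C > 0" and n: "n > 0"
  defines "A \<equiv> {\<omega> \<in> space (data \<nu> N n). C * sqrt n \<le> \<bar>cell_sum (covs \<omega>) (\<lambda>i. snd (\<omega> i)) n x\<bar>}"
  shows "A \<in> sets (data \<nu> N n)" and "measure (data \<nu> N n) A \<le> (\<integral>e. e\<^sup>2 \<partial>N) / C\<^sup>2"
proof -
  have N_mean: "integrable N (\<lambda>e. e)" "(\<integral>e. e \<partial>N) = 0"
    using \<open>centered N\<close> unfolding centered_def by auto
  have "\<forall>y. \<bar>indicator {x} y :: real\<bar> \<le> 1"
    by (simp add: indicator_def)
  note deviation = data_bounded_sum_deviation[OF fin N this N_mean(1) N_sq _ C n]
  have "A = {\<omega> \<in> space (data \<nu> N n). C * sqrt n \<le> \<bar>\<Sum>i<n. indicator {x} (fst (\<omega> i)) * snd (\<omega> i)\<bar>}"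
    unfolding A_def by (simp add: cell_sum_eq_sum_indicator covs_def)
  then show "A \<in> sets (data \<nu> N n)" "measure (data \<nu> N n) A \<le> (\<integral>e. e\<^sup>2 \<partial>N) / C\<^sup>2"
    using deviation N_mean(2) by simp_all
qed

lemma balanced_sample_likely:
  fixes \<nu> :: "(nat \<Rightarrow> nat) pmf" and \<delta> :: real
  assumes fin: "finite (set_pmf \<nu>)" and Noise: "prob_space Noise" "sets Noise = sets borel"
    and centered: "centered Noise" and subgaussian: "subgaussian Noise" and \<delta>: "\<delta> > 0"
  shows "\<exists>C. \<forall>n>0. \<exists>S\<in>sets (data \<nu> Noise n). measure (data \<nu> Noise n) S < \<delta> \<and>
           (\<forall>\<omega>\<in>space (data \<nu> Noise n) - S. balanced_sample \<nu> C n (covs \<omega>) (\<lambda>i. snd (\<omega> i)))"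
proof -
  let ?X = "set_pmf \<nu>"
  have noise_sq: "integrable Noise (\<lambda>e. e\<^sup>2)"
    by (rule subgaussian_square_integrable[OF Noise(2) subgaussian])
  define s2 where "s2 = (\<integral>e. e\<^sup>2 \<partial>Noise)"
  have s2: "0 \<le> s2"
    unfolding s2_def by (intro integral_nonneg_AE) auto
  define C where "C = 1 + card ?X * (1 + s2) / \<delta>"
  have C: "1 \<le> C"
    unfolding C_def using \<delta> s2 by auto
  then have C_pos: "0 < C"
    by simp
  have "card ?X * (1 + s2) < \<delta> * C"
    unfolding C_def using \<delta> by (simp add: field_simps)
  also have "\<dots> \<le> \<delta> * C\<^sup>2"
    using C \<delta> by (intro mult_left_mono) (auto simp: power2_eq_square)
  finally have C_large: "card ?X * ((1 + s2) / C\<^sup>2) < \<delta>"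
    using C by (simp add: field_simps)
  show ?thesis
  proof (intro exI[of _ C] allI impI)
    fix n :: nat assume n: "n > 0"
    let ?P = "data \<nu> Noise n"
    define Out where "Out = {\<omega> \<in> space ?P. \<exists>i<n. fst (\<omega> i) \<notin> ?X}"
    define Bad where "Bad x = {\<omega> \<in> space ?P. C * sqrt n \<le> \<bar>real (cell_count (covs \<omega>) n x) - real n * pmf \<nu> x\<bar>}
      \<union> {\<omega> \<in> space ?P. C * sqrt n \<le> \<bar>cell_sum (covs \<omega>) (\<lambda>i. snd (\<omega> i)) n x\<bar>}" for x
    note Out = data_outside_support_null[OF fin Noise(1), of n, folded Out_def]
    have Bad: "Bad x \<in> sets ?P" "measure ?P (Bad x) \<le> (1 + s2) / C\<^sup>2" if "x \<in> ?X" for x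
    proof -
      note count = cell_count_deviation[OF fin Noise(1) that C_pos n]
      note noise = cell_noise_deviation[OF fin Noise(1) centered noise_sq C_pos n, of x]
      show "Bad x \<in> sets ?P"
        using count(1) noise(1) unfolding Bad_def by blast
      have "measure ?P (Bad x) \<le> 1 / C\<^sup>2 + s2 / C\<^sup>2"
        using measure_Un_le[OF count(1) noise(1)] count(2) noise(2) unfolding Bad_def s2_def by linarith
      then show "measure ?P (Bad x) \<le> (1 + s2) / C\<^sup>2"
        by (simp add: add_divide_distrib)
    qed
    define S where "S = Out \<union> (\<Union>x\<in>?X. Bad x)"
    have S_sets: "S \<in> sets ?P"
      unfolding S_def using Out Bad fin by auto
    have "measure ?P S \<le> measure ?P Out + measure ?P (\<Union>x\<in>?X. Bad x)"
      unfolding S_def using Out Bad fin by (intro measure_Un_le) auto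
    also have "\<dots> \<le> (\<Sum>x\<in>?X. measure ?P (Bad x))"
      using Out Bad fin by (simp add: measure_UNION_le)
    also have "\<dots> \<le> card ?X * ((1 + s2) / C\<^sup>2)"
      by (rule sum_bounded_above) (use Bad in blast)
    finally have "measure ?P S < \<delta>"
      using C_large by linarith
    moreover have "balanced_sample \<nu> C n (covs \<omega>) (\<lambda>i. snd (\<omega> i))" if "\<omega> \<in> space ?P - S" for \<omega>
      using that unfolding S_def Out_def Bad_def balanced_sample_def by (auto simp: covs_def not_le)
    ultimately show "\<exists>S\<in>sets ?P. measure ?P S < \<delta> \<and>
        (\<forall>\<omega>\<in>space ?P - S. balanced_sample \<nu> C n (covs \<omega>) (\<lambda>i. snd (\<omega> i)))"
      using S_sets by blast
  qed
qed

section \<open>Stochastic boundedness\<close>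

lemma bigO_P_from_likely_events:
  fixes P :: "nat \<Rightarrow> 'a measure" and G :: "real \<Rightarrow> nat \<Rightarrow> 'a \<Rightarrow> bool"
  assumes likely: "\<And>\<delta>. 0 < \<delta> \<Longrightarrow> \<exists>C. \<forall>n>0. \<exists>S\<in>sets (P n). measure (P n) S < \<delta> \<and>
                                                    (\<forall>\<omega>\<in>space (P n) - S. G C n \<omega>)"
    and bound: "\<And>C. \<exists>N K. \<forall>n \<omega>. N < real n \<longrightarrow> G C n \<omega> \<longrightarrow> \<bar>a n \<omega>\<bar> \<le> K * b n"
    and b_pos: "\<And>n. 0 < n \<Longrightarrow> 0 < b n"
  shows "bigO_P P a b"
  unfolding bigO_P_def
proof (intro allI impI)
  fix \<delta> :: real assume "0 < \<delta> \<and> \<delta> < 1"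
  then obtain C where C: "\<forall>n>0. \<exists>S\<in>sets (P n). measure (P n) S < \<delta> \<and> (\<forall>\<omega>\<in>space (P n) - S. G C n \<omega>)"
    using likely by blast
  obtain N K where NK: "\<forall>n \<omega>. N < real n \<longrightarrow> G C n \<omega> \<longrightarrow> \<bar>a n \<omega>\<bar> \<le> K * b n"
    using bound by blast
  show "\<exists>N C. N > 0 \<and> C > 0 \<and> (\<forall>n. real n > N \<longrightarrow>
      (\<exists>S\<in>sets (P n). {\<omega>\<in>space (P n). \<bar>a n \<omega> / b n\<bar> > C} \<subseteq> S \<and> measure (P n) S < \<delta>))"
  proof (rule exI[of _ "max N 1"], rule exI[of _ "\<bar>K\<bar> + 1"], intro conjI allI impI)
    fix n assume n: "max N 1 < real n"
    then have "0 < n" by simp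
    then obtain S where S: "S \<in> sets (P n)" "measure (P n) S < \<delta>" "\<forall>\<omega>\<in>space (P n) - S. G C n \<omega>"
      using C by blast
    have b_n: "0 < b n"
      using \<open>0 < n\<close> by (rule b_pos)
    have bounded: "\<bar>a n \<omega> / b n\<bar> \<le> \<bar>K\<bar>" if "\<omega> \<in> space (P n) - S" for \<omega>
    proof -
      have "G C n \<omega>"
        using S(3) that by blast
      then have "\<bar>a n \<omega>\<bar> \<le> K * b n"
        using NK n by simp
      also have "\<dots> \<le> \<bar>K\<bar> * b n"
        using b_n by (intro mult_right_mono) auto
      finally show ?thesis
        using b_n by (simp add: abs_divide divide_le_eq)
    qed
    have "{\<omega>\<in>space (P n). \<bar>a n \<omega> / b n\<bar> > \<bar>K\<bar> + 1} \<subseteq> S"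
      using bounded by fastforce
    then show "\<exists>S\<in>sets (P n). {\<omega>\<in>space (P n). \<bar>a n \<omega> / b n\<bar> > \<bar>K\<bar> + 1} \<subseteq> S \<and> measure (P n) S < \<delta>"
      using S by blast
  qed auto
qed

lemma pmf_lower_bound_finite_support:
  assumes "finite (set_pmf \<nu>)"
  shows "\<exists>m>0. \<forall>x\<in>set_pmf \<nu>. m \<le> pmf \<nu> x"
proof (intro exI[of _ "Min (pmf \<nu> ` set_pmf \<nu>)"] conjI ballI)
  show "0 < Min (pmf \<nu> ` set_pmf \<nu>)"
    using assms set_pmf_not_empty[of \<nu>] by (subst Min_gr_iff) (auto simp: pmf_positive)
  show "Min (pmf \<nu> ` set_pmf \<nu>) \<le> pmf \<nu> x" if "x \<in> set_pmf \<nu>" for x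
    using assms that by (intro Min_le) auto
qed

theorem proposition4p1:
  fixes B d m :: nat and fstar :: "(nat \<Rightarrow> nat) \<Rightarrow> real" and \<nu> :: "(nat \<Rightarrow> nat) pmf"
    and Noise :: "real measure" and \<sigma>2 :: real and E E' :: "tree list"
  assumes "B \<ge> 1" and "d \<ge> 1" and "m \<ge> 1"
    and "set_pmf \<nu> = grid B d"
    and "prob_space Noise" and "sets Noise = sets borel"
    and "centered Noise" and "subgaussian Noise"
    and "\<sigma>2 > 0"
    and "E \<in> TSE B d m" and "E' \<in> TSE B d m"
  shows "bigO_P (data \<nu> Noise)
           (\<lambda>n \<omega>. (BIC \<sigma>2 B d E n (covs \<omega>) (resp fstar \<omega>) - BIC \<sigma>2 B d E' n (covs \<omega>) (resp fstar \<omega>))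
                  - real n / \<sigma>2 * (bias2 \<nu> B d E fstar - bias2 \<nu> B d E' fstar))
           (\<lambda>n. sqrt (real n))
       \<and> ((\<forall>x\<in>grid B d. proj \<nu> B d E fstar x = proj \<nu> B d E' fstar x) \<longrightarrow>
          bigO_P (data \<nu> Noise)
           (\<lambda>n \<omega>. (BIC \<sigma>2 B d E n (covs \<omega>) (resp fstar \<omega>) - BIC \<sigma>2 B d E' n (covs \<omega>) (resp fstar \<omega>))
                  - (real (df B d E) - real (df B d E')) * ln (real n))
           (\<lambda>n. 1))"
proof -
  let ?P = "data \<nu> Noise"
  let ?\<Delta>BIC = "\<lambda>n \<omega>. BIC \<sigma>2 B d E n (covs \<omega>) (resp fstar \<omega>) - BIC \<sigma>2 B d E' n (covs \<omega>) (resp fstar \<omega>)"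
  let ?balanced = "\<lambda>C n \<omega>. balanced_sample \<nu> C n (covs \<omega>) (\<lambda>i. snd (\<omega> i))"
  have fin: "finite (set_pmf \<nu>)"
    using assms(4) finite_grid by simp
  obtain p where p: "p > 0" "\<forall>x\<in>grid B d. p \<le> pmf \<nu> x"
    using pmf_lower_bound_finite_support[OF fin] assms(4) by auto
  note likely = balanced_sample_likely[OF fin assms(5-8)]
  have resp: "resp fstar \<omega> = (\<lambda>i. fstar (covs \<omega> i) + snd (\<omega> i))" for \<omega>
    unfolding resp_def covs_def ..
  have "bigO_P ?P (\<lambda>n \<omega>. ?\<Delta>BIC n \<omega> - real n / \<sigma>2 * (bias2 \<nu> B d E fstar - bias2 \<nu> B d E' fstar))
      (\<lambda>n. sqrt (real n))"
  proof (rule bigO_P_from_likely_events[OF likely])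
    fix C
    show "\<exists>N K. \<forall>n \<omega>. N < real n \<longrightarrow> ?balanced C n \<omega> \<longrightarrow>
        \<bar>?\<Delta>BIC n \<omega> - real n / \<sigma>2 * (bias2 \<nu> B d E fstar - bias2 \<nu> B d E' fstar)\<bar> \<le> K * sqrt (real n)"
      using BIC_diff_bias_bound[OF assms(4) p assms(9), where C=C and f=fstar and E=E and E'=E'] unfolding resp by blast
  qed auto
  moreover have "bigO_P ?P (\<lambda>n \<omega>. ?\<Delta>BIC n \<omega> - (real (df B d E) - real (df B d E')) * ln (real n)) (\<lambda>n. 1)"
    if "\<forall>x\<in>grid B d. proj \<nu> B d E fstar x = proj \<nu> B d E' fstar x"
  proof (rule bigO_P_from_likely_events[OF likely])
    fix C
    show "\<exists>N K. \<forall>n \<omega>. N < real n \<longrightarrow> ?balanced C n \<omega> \<longrightarrow>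
        \<bar>?\<Delta>BIC n \<omega> - (real (df B d E) - real (df B d E')) * ln (real n)\<bar> \<le> K * 1"
      using BIC_diff_df_bound[OF assms(4) p assms(9) that, where C=C] unfolding resp by simp blast
  qed auto
  ultimately show ?thesis
    by blast
qed

end
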